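(* Let $p$ be an odd prime. For every automorphism $\sigma$ of order $2$ of the uniform pro-$p$ group $\Gamma=\mathrm{Sl}_2^1(\mathbb Z_p)$, the action of $\sigma$ on $\Gamma$ is fixed-point-mixing modulo Frattini.
   Context: $\mathrm{Sl}_2^1(\mathbb Z_p)=\ker(\mathrm{SL}_2(\mathbb Z_p)\to\mathrm{SL}_2(\mathbb F_p))$. For $\sigma\in\mathrm{Aut}(\Gamma)$ of prime order: $\Gamma_\sigma^\circ$ = closed subgroup generated by $\sigma$-fixed elements, $\Gamma_\sigma$ its normal closure; $\sigma$ is fixed-point-mixing modulo Frattini if $\Gamma/\Gamma_\sigma$ acts non-trivially by conjugation on $\Gamma_\sigma/\Phi(\Gamma_\sigma)$, where $\Phi(H)=H^p[H,H]$. *)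

theory Defs
  imports "HOL-Algebra.Coset" "HOL-Computational_Algebra.Primes"
begin

text \<open>The p-adic integers Z_p, realised as the inverse limit of the rings Z/p^n:
  an element is a compatible sequence of residues x n in [0, p^n).\<close>

type_synonym zp = "nat \<Rightarrow> int"

definition Zp :: "nat \<Rightarrow> zp set" where
  "Zp p = {x. \<forall>n. 0 \<le> x n \<and> x n < int p ^ n \<and> x (Suc n) mod (int p ^ n) = x n}"

definition zp_add :: "nat \<Rightarrow> zp \<Rightarrow> zp \<Rightarrow> zp" where
  "zp_add p x y = (\<lambda>n. (x n + y n) mod (int p ^ n))"

definition zp_sub :: "nat \<Rightarrow> zp \<Rightarrow> zp \<Rightarrow> zp" where
  "zp_sub p x y = (\<lambda>n. (x n - y n) mod (int p ^ n))"

definition zp_mul :: "nat \<Rightarrow> zp \<Rightarrow> zp \<Rightarrow> zp" where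
  "zp_mul p x y = (\<lambda>n. (x n * y n) mod (int p ^ n))"

definition zp_one :: "nat \<Rightarrow> zp" where
  "zp_one p = (\<lambda>n. 1 mod (int p ^ n))"

definition zp_zero :: zp where
  "zp_zero = (\<lambda>n. 0)"

text \<open>2x2 matrices over Z_p, written (a, b, c, d) for the matrix [[a, b], [c, d]].\<close>

type_synonym mat2 = "zp \<times> zp \<times> zp \<times> zp"

definition mat_mul :: "nat \<Rightarrow> mat2 \<Rightarrow> mat2 \<Rightarrow> mat2" where
  "mat_mul p A B = (case A of (a, b, c, d) \<Rightarrow> case B of (a', b', c', d') \<Rightarrow>
     (zp_add p (zp_mul p a a') (zp_mul p b c'), zp_add p (zp_mul p a b') (zp_mul p b d'),
      zp_add p (zp_mul p c a') (zp_mul p d c'), zp_add p (zp_mul p c b') (zp_mul p d d')))"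

text \<open>Sl_2^1(Z_p): matrices in SL_2(Z_p) reducing to the identity modulo p
  (component n = 1 is the residue mod p).\<close>

definition Sl21_carrier :: "nat \<Rightarrow> mat2 set" where
  "Sl21_carrier p = {(a, b, c, d). a \<in> Zp p \<and> b \<in> Zp p \<and> c \<in> Zp p \<and> d \<in> Zp p
                 \<and> zp_sub p (zp_mul p a d) (zp_mul p b c) = zp_one p
                 \<and> a 1 = 1 \<and> b 1 = 0 \<and> c 1 = 0 \<and> d 1 = 1}"

definition Sl21 :: "nat \<Rightarrow> mat2 monoid" where
  "Sl21 p = \<lparr> carrier = Sl21_carrier p, monoid.mult = mat_mul p,
             monoid.one = (zp_one p, zp_zero, zp_zero, zp_one p) \<rparr>"

text \<open>Reduction modulo p^n; these reductions define the (profinite) topology.\<close>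

definition red :: "nat \<Rightarrow> mat2 \<Rightarrow> int \<times> int \<times> int \<times> int" where
  "red n A = (case A of (a, b, c, d) \<Rightarrow> (a n, b n, c n, d n))"

definition Sl21_closure :: "nat \<Rightarrow> mat2 set \<Rightarrow> mat2 set" where
  "Sl21_closure p S = {g \<in> carrier (Sl21 p). \<forall>n. \<exists>s\<in>S. red n s = red n g}"

definition Sl21_closed :: "nat \<Rightarrow> mat2 set \<Rightarrow> bool" where
  "Sl21_closed p S \<longleftrightarrow> S \<subseteq> carrier (Sl21 p) \<and> Sl21_closure p S \<subseteq> S"

definition continuous_aut :: "nat \<Rightarrow> (mat2 \<Rightarrow> mat2) \<Rightarrow> bool" where
  "continuous_aut p \<sigma> \<longleftrightarrow> \<sigma> \<in> iso (Sl21 p) (Sl21 p) \<and>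
     (\<forall>n. \<exists>m. \<forall>g\<in>carrier (Sl21 p). \<forall>h\<in>carrier (Sl21 p).
        red m g = red m h \<longrightarrow> red n (\<sigma> g) = red n (\<sigma> h))"

definition closed_subgroup_gen :: "nat \<Rightarrow> mat2 set \<Rightarrow> mat2 set" where
  "closed_subgroup_gen p S =
     \<Inter>{H. subgroup H (Sl21 p) \<and> Sl21_closed p H \<and> S \<subseteq> H}"

definition closed_normal_closure :: "nat \<Rightarrow> mat2 set \<Rightarrow> mat2 set" where
  "closed_normal_closure p S =
     \<Inter>{N. normal N (Sl21 p) \<and> Sl21_closed p N \<and> S \<subseteq> N}"

definition frattini :: "nat \<Rightarrow> mat2 set \<Rightarrow> mat2 set" where
  "frattini p H = closed_subgroup_gen p
     ({h [^]\<^bsub>Sl21 p\<^esub> p | h. h \<in> H} \<union>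
      {inv\<^bsub>Sl21 p\<^esub> h \<otimes>\<^bsub>Sl21 p\<^esub> inv\<^bsub>Sl21 p\<^esub> k \<otimes>\<^bsub>Sl21 p\<^esub> h \<otimes>\<^bsub>Sl21 p\<^esub> k | h k. h \<in> H \<and> k \<in> H})"

definition Gamma_sigma_circ :: "nat \<Rightarrow> (mat2 \<Rightarrow> mat2) \<Rightarrow> mat2 set" where
  "Gamma_sigma_circ p \<sigma> = closed_subgroup_gen p {g \<in> carrier (Sl21 p). \<sigma> g = g}"

definition Gamma_sigma :: "nat \<Rightarrow> (mat2 \<Rightarrow> mat2) \<Rightarrow> mat2 set" where
  "Gamma_sigma p \<sigma> = closed_normal_closure p (Gamma_sigma_circ p \<sigma>)"

text \<open>Fixed-point-mixing modulo Frattini: the conjugation action of Gamma (which factors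
  through Gamma / Gamma_sigma) on Gamma_sigma / Phi(Gamma_sigma) is non-trivial.\<close>

definition fpm_mod_frattini :: "nat \<Rightarrow> (mat2 \<Rightarrow> mat2) \<Rightarrow> bool" where
  "fpm_mod_frattini p \<sigma> \<longleftrightarrow>
     (\<exists>g\<in>carrier (Sl21 p). \<exists>h\<in>Gamma_sigma p \<sigma>.
        r_coset (Sl21 p) (frattini p (Gamma_sigma p \<sigma>))
          (g \<otimes>\<^bsub>Sl21 p\<^esub> h \<otimes>\<^bsub>Sl21 p\<^esub> inv\<^bsub>Sl21 p\<^esub> g)
        \<noteq> r_coset (Sl21 p) (frattini p (Gamma_sigma p \<sigma>)) h)"

end

theory Submission
  imports Defs
begin

text \<open>
  Let \<open>\<Gamma>\<^sub>j\<close> be the kernel of reduction modulo \<open>p\<^sup>j\<close>. For \<open>j \<ge> 1\<close> every \<open>A \<in> \<Gamma>\<^sub>j\<close> is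
  congruent to \<open>1 + p\<^sup>j X\<close> modulo \<open>p\<^sup>j\<^sup>+\<^sup>1\<close>, and the leading term \<open>X mod p\<close> identifies
  \<open>\<Gamma>\<^sub>j/\<Gamma>\<^sub>j\<^sub>+\<^sub>1\<close> with \<open>sl\<^sub>2(\<bbbF>\<^sub>p)\<close>: products add leading terms, \<open>p\<close>-th powers move them
  one level up, and the commutator of two level-one elements has the bracket of their leading
  terms as its leading term at level two. A continuous involution \<open>\<sigma>\<close> preserves every
  \<open>\<Gamma>\<^sub>j\<close> and induces one Lie algebra involution \<open>s\<close> of \<open>sl\<^sub>2(\<bbbF>\<^sub>p)\<close> on all layers. It is not
  the identity because \<open>\<sigma>\<close> is not, and not \<open>-id\<close> because \<open>-id\<close> does not preserve brackets;
  so its fixed space is a line \<open>\<bbbF>\<^sub>p X\<^sub>0\<close>. Halving (\<open>p\<close> is odd) and completeness produce a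
  \<open>\<sigma>\<close>-fixed \<open>t\<^sub>0\<close> with leading term \<open>X\<^sub>0\<close>.

  Hence \<open>\<Gamma>\<^sub>\<sigma>\<close> lies in the closed normal subgroup of elements whose level-one leading term
  is a multiple of \<open>X\<^sub>0\<close>, and \<open>\<Phi>(\<Gamma>\<^sub>\<sigma>)\<close> in the subgroup of elements of \<open>\<Gamma>\<^sub>2\<close> with
  leading term a multiple of \<open>X\<^sub>0\<close>. If \<open>g\<close> has leading term \<open>Y\<close> with \<open>[Y, X\<^sub>0] \<notin> \<bbbF>\<^sub>p X\<^sub>0\<close>,
  then \<open>g t\<^sub>0 g\<^sup>-\<^sup>1 t\<^sub>0\<^sup>-\<^sup>1\<close> has leading term \<open>[Y, X\<^sub>0]\<close> at level two, so conjugation by \<open>g\<close>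
  moves \<open>t\<^sub>0 \<in> \<Gamma>\<^sub>\<sigma>\<close> to a different coset of \<open>\<Phi>(\<Gamma>\<^sub>\<sigma>)\<close>.
\<close>

section \<open>Integer \<open>2\<times>2\<close> matrices\<close>

datatype m2 = M2 (e11: int) (e12: int) (e21: int) (e22: int)

instantiation m2 :: ring_1
begin
definition "zero_m2 = M2 0 0 0 0"
definition "one_m2 = M2 1 0 0 1"
definition "plus_m2 A B = M2 (e11 A + e11 B) (e12 A + e12 B) (e21 A + e21 B) (e22 A + e22 B)"
definition "minus_m2 A B = M2 (e11 A - e11 B) (e12 A - e12 B) (e21 A - e21 B) (e22 A - e22 B)"
definition "uminus_m2 A = M2 (- e11 A) (- e12 A) (- e21 A) (- e22 A)"
definition "times_m2 A B = M2 (e11 A * e11 B + e12 A * e21 B) (e11 A * e12 B + e12 A * e22 B)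
   (e21 A * e11 B + e22 A * e21 B) (e21 A * e12 B + e22 A * e22 B)"
instance
  by standard
    (simp_all add: zero_m2_def one_m2_def plus_m2_def minus_m2_def uminus_m2_def times_m2_def
      algebra_simps)
end

lemma m2_simps [simp]:
  "M2 a b c d + M2 a' b' c' d' = M2 (a + a') (b + b') (c + c') (d + d')"
  "M2 a b c d - M2 a' b' c' d' = M2 (a - a') (b - b') (c - c') (d - d')"
  "- M2 a b c d = M2 (- a) (- b) (- c) (- d)"
  "M2 a b c d * M2 a' b' c' d' = M2 (a*a' + b*c') (a*b' + b*d') (c*a' + d*c') (c*b' + d*d')"
  by (simp_all add: plus_m2_def minus_m2_def uminus_m2_def times_m2_def)

lemma m2_zero_one: "(0::m2) = M2 0 0 0 0" "(1::m2) = M2 1 0 0 1"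
  by (simp_all add: zero_m2_def one_m2_def)

lemma m2_zero_one_sel [simp]:
  "e11 0 = 0" "e12 0 = 0" "e21 0 = 0" "e22 0 = 0"
  "e11 1 = 1" "e12 1 = 0" "e21 1 = 0" "e22 1 = 1"
  by (simp_all add: zero_m2_def one_m2_def)

lemma of_nat_m2: "(of_nat n :: m2) = M2 (int n) 0 0 (int n)"
  by (induction n) (auto simp: algebra_simps m2_zero_one)

lemma of_int_m2: "(of_int k :: m2) = M2 k 0 0 k"
proof (cases k rule: int_cases)
  case (nonneg n)
  then show ?thesis by (simp add: of_nat_m2)
next
  case (neg n)
  then show ?thesis by (simp only: of_int_minus of_int_of_nat_eq of_nat_m2) (simp add: algebra_simps)
qed

definition mdet :: "m2 \<Rightarrow> int" where "mdet A = e11 A * e22 A - e12 A * e21 A"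
definition mtr :: "m2 \<Rightarrow> int" where "mtr A = e11 A + e22 A"
definition adj :: "m2 \<Rightarrow> m2" where "adj A = M2 (e22 A) (- e12 A) (- e21 A) (e11 A)"
definition bracket :: "m2 \<Rightarrow> m2 \<Rightarrow> m2" where "bracket X Y = X * Y - Y * X"

lemma mdet_mult: "mdet (A * B) = mdet A * mdet B"
  by (cases A; cases B) (simp add: mdet_def algebra_simps)

lemma mdet_adj: "mdet (adj A) = mdet A"
  by (simp add: mdet_def adj_def algebra_simps)

lemma mult_adj: "A * adj A = of_int (mdet A)" "adj A * A = of_int (mdet A)"
  by (cases A; simp add: mdet_def adj_def algebra_simps of_int_m2)+

lemma adj_one: "adj 1 = 1"
  by (simp add: adj_def m2_zero_one)

lemma adj_add: "adj (A + B) = adj A + adj B"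
  by (cases A; cases B) (simp add: adj_def)

lemma adj_smult: "adj (of_int k * A) = of_int k * adj A"
  by (cases A) (simp add: adj_def of_int_m2)

lemma mtr_diff: "mtr (X - Y) = mtr X - mtr Y"
  by (cases X; cases Y) (simp add: mtr_def)

lemma mtr_neg: "mtr (- X) = - mtr X"
  by (cases X) (simp add: mtr_def)

lemma mtr_smult: "mtr (of_int k * X) = k * mtr X"
  by (cases X) (simp add: mtr_def of_int_m2 algebra_simps)

lemma mtr_bracket: "mtr (bracket X Y) = 0"
  by (cases X; cases Y) (simp add: bracket_def mtr_def)

definition mcong :: "int \<Rightarrow> m2 \<Rightarrow> m2 \<Rightarrow> bool" where
  "mcong q A B \<longleftrightarrow> (\<exists>C. A = B + of_int q * C)"

lemma mcong_entries:
  "mcong q A B \<longleftrightarrow> q dvd (e11 A - e11 B) \<and> q dvd (e12 A - e12 B)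
     \<and> q dvd (e21 A - e21 B) \<and> q dvd (e22 A - e22 B)"
proof
  assume "mcong q A B"
  then obtain C where "A = B + of_int q * C" by (auto simp: mcong_def)
  then show "q dvd (e11 A - e11 B) \<and> q dvd (e12 A - e12 B)
    \<and> q dvd (e21 A - e21 B) \<and> q dvd (e22 A - e22 B)"
    by (cases B; cases C) (auto simp: of_int_m2)
next
  assume "q dvd (e11 A - e11 B) \<and> q dvd (e12 A - e12 B)
    \<and> q dvd (e21 A - e21 B) \<and> q dvd (e22 A - e22 B)"
  then obtain a b c d where "e11 A - e11 B = q*a" "e12 A - e12 B = q*b"
      "e21 A - e21 B = q*c" "e22 A - e22 B = q*d"
    by (auto elim!: dvdE)
  then have "A = B + of_int q * M2 a b c d"
    by (cases A; cases B) (auto simp: algebra_simps of_int_m2)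
  then show "mcong q A B" unfolding mcong_def by blast
qed

lemma mcong_refl [simp]: "mcong q A A"
  unfolding mcong_entries by simp

lemma mcong_sym: "mcong q A B \<Longrightarrow> mcong q B A"
  unfolding mcong_entries by (metis dvd_diff_commute)

lemma mcong_trans [trans]: "mcong q A B \<Longrightarrow> mcong q B C \<Longrightarrow> mcong q A C"
  unfolding mcong_def by (metis add.assoc distrib_left of_int_mult)

lemma mcong_add: "mcong q A B \<Longrightarrow> mcong q C D \<Longrightarrow> mcong q (A + C) (B + D)"
  unfolding mcong_def by (metis add.assoc add.left_commute distrib_left)

lemma mcong_minus: "mcong q A B \<Longrightarrow> mcong q (- A) (- B)"
  unfolding mcong_def by (metis minus_add_distrib mult_minus_right)

lemma mcong_diff: "mcong q A B \<Longrightarrow> mcong q C D \<Longrightarrow> mcong q (A - C) (B - D)"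
  by (metis diff_conv_add_uminus mcong_add mcong_minus)

lemma mcong_mult: "mcong q A B \<Longrightarrow> mcong q C D \<Longrightarrow> mcong q (A * C) (B * D)"
proof -
  assume "mcong q A B" "mcong q C D"
  then obtain E F where e: "A = B + of_int q * E" "C = D + of_int q * F"
    by (auto simp: mcong_def)
  have "A * C = B * D + of_int q * (E * D + B * F + of_int q * (E * F))"
    unfolding e by (cases B; cases D; cases E; cases F) (simp add: algebra_simps of_int_m2)
  then show ?thesis by (auto simp: mcong_def)
qed

lemma mcong_add_cancel: "mcong q (A + B) (A + C) \<Longrightarrow> mcong q B C"
  by (drule mcong_diff[OF _ mcong_refl[of q A]]) simp

lemma mcong_dvd: "mcong q A B \<Longrightarrow> r dvd q \<Longrightarrow> mcong r A B"
  unfolding mcong_entries using dvd_trans by blast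

lemma mcong_smult: "mcong q A B \<Longrightarrow> mcong (k * q) (of_int k * A) (of_int k * B)"
  unfolding mcong_entries
  by (cases A; cases B) (auto simp: right_diff_distrib[symmetric] of_int_m2)

lemma mcong_smult_cancel:
  "k \<noteq> 0 \<Longrightarrow> mcong (k * r) (of_int k * X) (of_int k * Y) \<Longrightarrow> mcong r X Y"
  unfolding mcong_entries
  by (cases X; cases Y) (simp add: right_diff_distrib[symmetric] of_int_m2)

lemma mcong_scalars: "k dvd (a - b) \<Longrightarrow> mcong k X Y \<Longrightarrow> mcong k (of_int a * X) (of_int b * Y)"
  by (rule mcong_mult) (simp_all add: mcong_entries of_int_m2)

lemma mcong_add_smult: "mcong q (A + of_int q * B) A"
  unfolding mcong_def by blast

lemma mcong_of_int: "q dvd (d - 1) \<Longrightarrow> mcong q (of_int d) 1"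
  by (simp add: mcong_entries of_int_m2)

lemma mcong_mdet: "mcong q A B \<Longrightarrow> q dvd (mdet A - mdet B)"
proof -
  assume "mcong q A B"
  then obtain C where c: "A = B + of_int q * C" by (auto simp: mcong_def)
  show ?thesis unfolding c by (cases B; cases C) (simp add: mdet_def algebra_simps of_int_m2)
qed

lemma mcong_mtr: "mcong q A B \<Longrightarrow> q dvd (mtr A - mtr B)"
proof -
  have "mtr A - mtr B = (e11 A - e11 B) + (e22 A - e22 B)" by (simp add: mtr_def)
  then show "mcong q A B \<Longrightarrow> q dvd (mtr A - mtr B)" by (simp add: mcong_entries)
qed

lemma mcong_adj: "mcong q A B \<Longrightarrow> mcong q (adj A) (adj B)"
  unfolding mcong_def by (metis adj_add adj_smult)

lemma mcong_bracket: "mcong q A A' \<Longrightarrow> mcong q B B' \<Longrightarrow> mcong q (bracket A B) (bracket A' B')"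
  unfolding bracket_def by (intro mcong_diff mcong_mult)

lemma mcong_mult_smult:
  "mcong k M 1 \<Longrightarrow> mcong (k * k') (M * (of_int k' * W)) (of_int k' * W)"
proof -
  assume "mcong k M 1"
  then obtain C where c: "M = 1 + of_int k * C" by (auto simp: mcong_def)
  have "M * (of_int k' * W) = of_int k' * W + of_int (k * k') * (C * W)"
    unfolding c by (cases C; cases W) (simp add: algebra_simps of_int_m2)
  then show ?thesis by (simp only:) (rule mcong_add_smult)
qed

lemma binomial_m2:
  "\<exists>R. (1 + of_int s * T :: m2) ^ m = 1 + of_int (int m * s) * T
     + of_int (int (m choose 2) * s^2) * (T * T) + of_int (s^3) * R"
proof (induction m)
  case 0
  show ?case by (rule exI[of _ 0]) (simp add: numeral_2_eq_2)
next
  case (Suc m)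
  then obtain R where R: "(1 + of_int s * T :: m2) ^ m = 1 + of_int (int m * s) * T
     + of_int (int (m choose 2) * s^2) * (T * T) + of_int (s^3) * R" by blast
  have ch: "Suc m choose 2 = m + (m choose 2)"
    by (simp add: numeral_2_eq_2)
  have "(1 + of_int s * T :: m2) ^ Suc m = 1 + of_int (int (Suc m) * s) * T
     + of_int (int (Suc m choose 2) * s^2) * (T * T)
     + of_int (s^3) * (R + of_int (int (m choose 2)) * (T * T * T) + of_int s * (R * T))"
    unfolding power_Suc2 R ch
    by (cases T; cases R) (simp add: algebra_simps power2_eq_square power3_eq_cube of_int_m2)
  then show ?case by blast
qed

lemma commutator_m2:
  "adj a * adj b * a * b = of_int (mdet a * mdet b) + adj a * adj b * bracket a b"
  by (cases a; cases b) (simp add: adj_def mdet_def bracket_def algebra_simps of_int_m2)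

lemma bracket_one_add_smult:
  "bracket (1 + of_int k * T) (1 + of_int k * U) = of_int (k * k) * bracket T U"
  by (cases T; cases U) (simp add: bracket_def algebra_simps of_int_m2)

section \<open>The group \<open>Sl\<^sub>2\<^sup>1(\<int>\<^sub>p)\<close> through its reductions\<close>

text \<open>\<open>rep n A\<close> is the reduction of \<open>A\<close> modulo \<open>p\<^sup>n\<close>, as an integer matrix with entries in
  \<open>[0, p\<^sup>n)\<close>; \<open>ofseq p F\<close> assembles a matrix over \<open>\<int>\<^sub>p\<close> from approximations \<open>F n\<close>.\<close>

definition rep :: "nat \<Rightarrow> mat2 \<Rightarrow> m2" where
  "rep n A = (case A of (a, b, c, d) \<Rightarrow> M2 (a n) (b n) (c n) (d n))"

definition mmod :: "int \<Rightarrow> m2 \<Rightarrow> m2" where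
  "mmod q M = M2 (e11 M mod q) (e12 M mod q) (e21 M mod q) (e22 M mod q)"

definition ofseq :: "nat \<Rightarrow> (nat \<Rightarrow> m2) \<Rightarrow> mat2" where
  "ofseq p F = ((\<lambda>n. e11 (F n) mod int p ^ n), (\<lambda>n. e12 (F n) mod int p ^ n),
                (\<lambda>n. e21 (F n) mod int p ^ n), (\<lambda>n. e22 (F n) mod int p ^ n))"

lemma mcong_mmod: "mcong q (mmod q M) M"
  unfolding mcong_entries mmod_def by (simp add: mod_eq_dvd_iff[symmetric])

lemma rep_ofseq: "rep n (ofseq p F) = mmod (int p ^ n) (F n)"
  by (simp add: rep_def ofseq_def mmod_def)

lemma red_eq_iff_rep_eq: "red n A = red n B \<longleftrightarrow> rep n A = rep n B"
  by (cases A; cases B) (auto simp: red_def rep_def)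

lemma eq_by_rep: "(\<And>n. rep n A = rep n B) \<Longrightarrow> A = B"
  by (cases A; cases B) (auto simp: rep_def fun_eq_iff)

lemma mat_mul_ofseq: "mat_mul p A B = ofseq p (\<lambda>n. rep n A * rep n B)"
  by (cases A; cases B)
    (simp add: mat_mul_def ofseq_def rep_def zp_add_def zp_mul_def fun_eq_iff mod_add_eq)

lemma Zp_mod_power: "x \<in> Zp p \<Longrightarrow> m \<le> n \<Longrightarrow> x n mod int p ^ m = x m"
proof (induction n)
  case 0
  then have "0 \<le> x 0 \<and> x 0 < int p ^ 0" unfolding Zp_def by blast
  with 0 show ?case by simp
next
  case (Suc n)
  show ?case
  proof (cases "m = Suc n")
    case True
    have "0 \<le> x (Suc n) \<and> x (Suc n) < int p ^ Suc n" using Suc.prems unfolding Zp_def by blast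
    then show ?thesis using True by (simp add: mod_pos_pos_trivial del: power_Suc)
  next
    case False
    then have "m \<le> n" using Suc.prems by simp
    then have "int p ^ m dvd int p ^ n" by (simp add: le_imp_power_dvd)
    then have "x (Suc n) mod int p ^ m = (x (Suc n) mod int p ^ n) mod int p ^ m"
      by (simp add: mod_mod_cancel)
    also have "\<dots> = x n mod int p ^ m" using Suc.prems by (simp add: Zp_def)
    finally show ?thesis using Suc.IH[OF Suc.prems(1) \<open>m \<le> n\<close>] by simp
  qed
qed

locale odd_prime =
  fixes p :: nat
  assumes prime_p: "prime p" and odd_p: "odd p"
begin

abbreviation "G \<equiv> Sl21 p"
abbreviation q :: "nat \<Rightarrow> int" where "q n \<equiv> int p ^ n"

lemma p_ge3: "p \<ge> 3"
  using prime_ge_2_nat[OF prime_p] odd_p by (cases "p = 2") auto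

lemma q_pos: "q n > 0"
  using p_ge3 by simp

lemma not_p_dvd_2: "\<not> int p dvd 2"
  using p_ge3 zdvd_imp_le[of "int p" 2] by auto

lemma p_dvd_2_times_iff: "int p dvd (2 * x) \<longleftrightarrow> int p dvd x"
  using prime_dvd_mult_iff[of "int p" 2 x] prime_p not_p_dvd_2 by auto

definition sl21_seq :: "(nat \<Rightarrow> m2) \<Rightarrow> bool" where
  "sl21_seq F \<longleftrightarrow> (\<forall>n. mcong (q n) (F (Suc n)) (F n)) \<and> (\<forall>n. q n dvd (mdet (F n) - 1))
     \<and> mcong (int p) (F 1) 1"

lemma ofseq_entry_Zp:
  assumes "\<And>n. q n dvd (f (Suc n) - f n)"
  shows "(\<lambda>n. f n mod q n) \<in> Zp p"
proof -
  have "(f (Suc n) mod q (Suc n)) mod q n = f n mod q n" for n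
  proof -
    have "(f (Suc n) mod q (Suc n)) mod q n = f (Suc n) mod q n"
      by (simp add: mod_mod_cancel)
    also have "\<dots> = f n mod q n" using assms[of n] by (simp add: mod_eq_dvd_iff)
    finally show ?thesis .
  qed
  then show ?thesis unfolding Zp_def using q_pos by simp
qed

lemma ofseq_carrier:
  assumes "sl21_seq F"
  shows "ofseq p F \<in> carrier G"
proof -
  from assms have c: "\<And>n. mcong (q n) (F (Suc n)) (F n)"
    and d: "\<And>n. q n dvd (mdet (F n) - 1)" and o: "mcong (int p) (F 1) 1"
    by (auto simp: sl21_seq_def)
  have Z: "(\<lambda>n. e11 (F n) mod q n) \<in> Zp p" "(\<lambda>n. e12 (F n) mod q n) \<in> Zp p"
      "(\<lambda>n. e21 (F n) mod q n) \<in> Zp p" "(\<lambda>n. e22 (F n) mod q n) \<in> Zp p"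
    using c[unfolded mcong_entries] by (auto intro!: ofseq_entry_Zp)
  have "((e11 (F n) mod q n * (e22 (F n) mod q n)) mod q n -
         (e12 (F n) mod q n * (e21 (F n) mod q n)) mod q n) mod q n = 1 mod q n" for n
  proof -
    have "((e11 (F n) mod q n * (e22 (F n) mod q n)) mod q n -
           (e12 (F n) mod q n * (e21 (F n) mod q n)) mod q n) mod q n = mdet (F n) mod q n"
      by (simp add: mdet_def mod_diff_eq mod_mult_eq)
    also have "\<dots> = 1 mod q n" using d[of n] by (simp add: mod_eq_dvd_iff)
    finally show ?thesis .
  qed
  then have det: "zp_sub p (zp_mul p (\<lambda>n. e11 (F n) mod q n) (\<lambda>n. e22 (F n) mod q n))
      (zp_mul p (\<lambda>n. e12 (F n) mod q n) (\<lambda>n. e21 (F n) mod q n)) = zp_one p"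
    by (simp add: zp_sub_def zp_mul_def zp_one_def fun_eq_iff)
  have one: "e11 (F 1) mod int p = 1" "e12 (F 1) mod int p = 0" "e21 (F 1) mod int p = 0"
     "e22 (F 1) mod int p = 1"
    using o p_ge3 unfolding mcong_entries by (auto simp: mod_eq_dvd_iff[symmetric] elim!: dvdE)
  show ?thesis
    using Z det one by (simp add: Sl21_def Sl21_carrier_def ofseq_def)
qed

lemma carrier_repD:
  assumes "A \<in> carrier G"
  shows "sl21_seq (\<lambda>n. rep n A)" and "A = ofseq p (\<lambda>n. rep n A)"
    and "\<And>n. mmod (q n) (rep n A) = rep n A"
proof -
  obtain a b c d where A: "A = (a, b, c, d)" by (cases A)
  from assms have Z: "a \<in> Zp p" "b \<in> Zp p" "c \<in> Zp p" "d \<in> Zp p"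
    and det: "zp_sub p (zp_mul p a d) (zp_mul p b c) = zp_one p"
    and one: "a 1 = 1" "b 1 = 0" "c 1 = 0" "d 1 = 1"
    by (auto simp: A Sl21_def Sl21_carrier_def)
  show "\<And>n. mmod (q n) (rep n A) = rep n A"
    using Z by (simp add: A rep_def mmod_def Zp_def)
  then show "A = ofseq p (\<lambda>n. rep n A)"
    by (intro eq_by_rep) (simp add: rep_ofseq)
  have "mcong (q n) (rep (Suc n) A) (rep n A)" for n
    unfolding mcong_entries using Z by (simp add: A rep_def Zp_def mod_eq_dvd_iff[symmetric])
  moreover have "q n dvd (mdet (rep n A) - 1)" for n
  proof -
    have "(a n * d n mod q n - b n * c n mod q n) mod q n = 1 mod q n"
      using det by (simp add: zp_sub_def zp_mul_def zp_one_def fun_eq_iff)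
    then show ?thesis by (simp add: A rep_def mdet_def mod_diff_eq mod_eq_dvd_iff)
  qed
  moreover have "mcong (int p) (rep 1 A) 1"
    using one by (simp add: A rep_def mcong_entries)
  ultimately show "sl21_seq (\<lambda>n. rep n A)" by (simp add: sl21_seq_def)
qed

lemma mdet_rep: "A \<in> carrier G \<Longrightarrow> q n dvd (mdet (rep n A) - 1)"
  using carrier_repD(1) by (simp add: sl21_seq_def)

lemma rep_mono:
  assumes "A \<in> carrier G" "m \<le> n"
  shows "mcong (q m) (rep n A) (rep m A)"
proof -
  obtain a b c d where A: "A = (a, b, c, d)" by (cases A)
  from assms have "a \<in> Zp p" "b \<in> Zp p" "c \<in> Zp p" "d \<in> Zp p"
    by (auto simp: A Sl21_def Sl21_carrier_def)
  then show ?thesis unfolding mcong_entries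
    using Zp_mod_power[OF _ assms(2), of _ p]
    by (simp add: A rep_def Zp_def mod_eq_dvd_iff[symmetric])
qed

lemma rep_eqI:
  assumes "A \<in> carrier G" "B \<in> carrier G" "mcong (q n) (rep n A) (rep n B)"
  shows "rep n A = rep n B"
proof -
  have "mmod (q n) (rep n A) = mmod (q n) (rep n B)"
    using assms(3) unfolding mcong_entries mmod_def by (simp add: mod_eq_dvd_iff)
  then show ?thesis using carrier_repD(3)[OF assms(1)] carrier_repD(3)[OF assms(2)] by simp
qed

lemma rep_eq_mono:
  assumes "A \<in> carrier G" "B \<in> carrier G" "n \<le> m" "rep m A = rep m B"
  shows "rep n A = rep n B"
  using rep_eqI[OF assms(1,2)] rep_mono[OF assms(1,3)] rep_mono[OF assms(2,3)] assms(4)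
  by (metis mcong_sym mcong_trans)

lemma carrier_eqI:
  "A \<in> carrier G \<Longrightarrow> B \<in> carrier G \<Longrightarrow> (\<And>n. mcong (q n) (rep n A) (rep n B)) \<Longrightarrow> A = B"
  by (intro eq_by_rep rep_eqI)

lemma mult_G: "A \<otimes>\<^bsub>G\<^esub> B = mat_mul p A B"
  by (simp add: Sl21_def)

lemma one_G: "\<one>\<^bsub>G\<^esub> = ofseq p (\<lambda>_. 1)"
  by (simp add: Sl21_def ofseq_def zp_one_def zp_zero_def)

lemma sl21_seq_const: "mdet M = 1 \<Longrightarrow> mcong (int p) M 1 \<Longrightarrow> sl21_seq (\<lambda>_. M)"
  by (simp add: sl21_seq_def)

lemma sl21_seq_mult: "sl21_seq F \<Longrightarrow> sl21_seq H \<Longrightarrow> sl21_seq (\<lambda>n. F n * H n)"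
proof -
  have "k dvd (x * y - 1)" if "k dvd (x - 1)" "k dvd (y - 1)" for k x y :: int
  proof -
    have "x * y - 1 = (x - 1) * y + (y - 1)" by (simp add: algebra_simps)
    then show ?thesis using that by (metis dvd_add dvd_mult2)
  qed
  then show "sl21_seq F \<Longrightarrow> sl21_seq H \<Longrightarrow> sl21_seq (\<lambda>n. F n * H n)"
    unfolding sl21_seq_def using mcong_mult[of "int p" "F 1" 1 "H 1" 1] mcong_mult
    by (simp add: mdet_mult)
qed

lemma sl21_seq_adj: "sl21_seq F \<Longrightarrow> sl21_seq (\<lambda>n. adj (F n))"
  unfolding sl21_seq_def mdet_adj using mcong_adj[of "int p" "F 1" 1] mcong_adj
  unfolding adj_one by simp

lemma mult_carrier: "A \<in> carrier G \<Longrightarrow> B \<in> carrier G \<Longrightarrow> A \<otimes>\<^bsub>G\<^esub> B \<in> carrier G"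
  unfolding mult_G mat_mul_ofseq by (intro ofseq_carrier sl21_seq_mult carrier_repD(1))

lemma rep_mult:
  "A \<in> carrier G \<Longrightarrow> B \<in> carrier G \<Longrightarrow> mcong (q n) (rep n (A \<otimes>\<^bsub>G\<^esub> B)) (rep n A * rep n B)"
  unfolding mult_G mat_mul_ofseq rep_ofseq by (rule mcong_mmod)

lemma one_carrier: "\<one>\<^bsub>G\<^esub> \<in> carrier G"
  unfolding one_G by (rule ofseq_carrier) (simp add: sl21_seq_def mdet_def)

lemma rep_one: "mcong (q n) (rep n \<one>\<^bsub>G\<^esub>) 1"
  unfolding one_G rep_ofseq by (rule mcong_mmod)

definition minv :: "mat2 \<Rightarrow> mat2" where
  "minv A = ofseq p (\<lambda>n. adj (rep n A))"

lemma minv_carrier: "A \<in> carrier G \<Longrightarrow> minv A \<in> carrier G"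
  unfolding minv_def by (intro ofseq_carrier sl21_seq_adj carrier_repD(1))

lemma rep_minv: "mcong (q n) (rep n (minv A)) (adj (rep n A))"
  unfolding minv_def rep_ofseq by (rule mcong_mmod)

lemma rep_mult3:
  assumes "x \<in> carrier G" "y \<in> carrier G" "z \<in> carrier G"
  shows "mcong (q n) (rep n (x \<otimes>\<^bsub>G\<^esub> y \<otimes>\<^bsub>G\<^esub> z)) (rep n x * rep n y * rep n z)"
    and "mcong (q n) (rep n (x \<otimes>\<^bsub>G\<^esub> (y \<otimes>\<^bsub>G\<^esub> z))) (rep n x * rep n y * rep n z)"
proof -
  have "mcong (q n) (rep n (x \<otimes>\<^bsub>G\<^esub> y \<otimes>\<^bsub>G\<^esub> z)) (rep n (x \<otimes>\<^bsub>G\<^esub> y) * rep n z)"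
    by (rule rep_mult[OF mult_carrier[OF assms(1,2)] assms(3)])
  also have "mcong (q n) \<dots> (rep n x * rep n y * rep n z)"
    by (rule mcong_mult[OF rep_mult[OF assms(1,2)] mcong_refl])
  finally show "mcong (q n) (rep n (x \<otimes>\<^bsub>G\<^esub> y \<otimes>\<^bsub>G\<^esub> z)) (rep n x * rep n y * rep n z)" .
  have "mcong (q n) (rep n (x \<otimes>\<^bsub>G\<^esub> (y \<otimes>\<^bsub>G\<^esub> z))) (rep n x * rep n (y \<otimes>\<^bsub>G\<^esub> z))"
    by (rule rep_mult[OF assms(1) mult_carrier[OF assms(2,3)]])
  also have "mcong (q n) \<dots> (rep n x * (rep n y * rep n z))"
    by (rule mcong_mult[OF mcong_refl rep_mult[OF assms(2,3)]])
  finally show "mcong (q n) (rep n (x \<otimes>\<^bsub>G\<^esub> (y \<otimes>\<^bsub>G\<^esub> z))) (rep n x * rep n y * rep n z)"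
    by (simp add: mult.assoc)
qed

lemma minv_mult: "x \<in> carrier G \<Longrightarrow> minv x \<otimes>\<^bsub>G\<^esub> x = \<one>\<^bsub>G\<^esub>"
proof (rule carrier_eqI)
  fix n assume c: "x \<in> carrier G"
  have "mcong (q n) (rep n (minv x \<otimes>\<^bsub>G\<^esub> x)) (rep n (minv x) * rep n x)"
    by (rule rep_mult[OF minv_carrier[OF c] c])
  also have "mcong (q n) \<dots> (adj (rep n x) * rep n x)"
    by (rule mcong_mult[OF rep_minv mcong_refl])
  also have "adj (rep n x) * rep n x = of_int (mdet (rep n x))"
    by (rule mult_adj)
  also have "mcong (q n) \<dots> 1"
    by (rule mcong_of_int[OF mdet_rep[OF c]])
  also have "mcong (q n) 1 (rep n \<one>\<^bsub>G\<^esub>)"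
    by (rule mcong_sym[OF rep_one])
  finally show "mcong (q n) (rep n (minv x \<otimes>\<^bsub>G\<^esub> x)) (rep n \<one>\<^bsub>G\<^esub>)" .
qed (use mult_carrier minv_carrier one_carrier in auto)

lemma group_G: "group G"
proof (rule groupI)
  fix x y z assume c: "x \<in> carrier G" "y \<in> carrier G" "z \<in> carrier G"
  show "x \<otimes>\<^bsub>G\<^esub> y \<otimes>\<^bsub>G\<^esub> z = x \<otimes>\<^bsub>G\<^esub> (y \<otimes>\<^bsub>G\<^esub> z)"
    using c by (intro carrier_eqI mult_carrier mcong_trans[OF rep_mult3(1) mcong_sym[OF rep_mult3(2)]])
next
  fix x assume c: "x \<in> carrier G"
  have "mcong (q n) (rep n (\<one>\<^bsub>G\<^esub> \<otimes>\<^bsub>G\<^esub> x)) (rep n x)" for n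
    using mcong_trans[OF rep_mult[OF one_carrier c] mcong_mult[OF rep_one mcong_refl]] by simp
  then show "\<one>\<^bsub>G\<^esub> \<otimes>\<^bsub>G\<^esub> x = x"
    using c by (intro carrier_eqI mult_carrier one_carrier)
  show "\<exists>y\<in>carrier G. y \<otimes>\<^bsub>G\<^esub> x = \<one>\<^bsub>G\<^esub>"
    using minv_carrier[OF c] minv_mult[OF c] by blast
qed (use mult_carrier one_carrier in auto)

sublocale G: group G
  by (rule group_G)

lemma rep_inv: "A \<in> carrier G \<Longrightarrow> mcong (q n) (rep n (inv\<^bsub>G\<^esub> A)) (adj (rep n A))"
  using G.inv_equality[OF minv_mult] minv_carrier rep_minv by simp

lemma rep_pow: "A \<in> carrier G \<Longrightarrow> mcong (q n) (rep n (A [^]\<^bsub>G\<^esub> (k::nat))) (rep n A ^ k)"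
proof (induction k)
  case 0
  then show ?case using rep_one by simp
next
  case (Suc k)
  have "mcong (q n) (rep n (A [^]\<^bsub>G\<^esub> k \<otimes>\<^bsub>G\<^esub> A)) (rep n (A [^]\<^bsub>G\<^esub> k) * rep n A)"
    using Suc.prems by (intro rep_mult) auto
  also have "mcong (q n) \<dots> (rep n A ^ k * rep n A)"
    using Suc by (intro mcong_mult) auto
  finally show ?case by (simp add: power_commutes)
qed

section \<open>The congruence filtration and leading terms\<close>

text \<open>\<open>level j\<close> is the congruence subgroup \<open>\<Gamma>\<^sub>j\<close>, and \<open>lead j A X\<close> says
  \<open>A \<equiv> 1 + p\<^sup>j X (mod p\<^sup>j\<^sup>+\<^sup>1)\<close>; the leading term \<open>X\<close> is determined modulo \<open>p\<close>.\<close>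

definition level :: "nat \<Rightarrow> mat2 set" where
  "level j = {A \<in> carrier G. mcong (q j) (rep j A) 1}"

definition lead :: "nat \<Rightarrow> mat2 \<Rightarrow> m2 \<Rightarrow> bool" where
  "lead j A X \<longleftrightarrow> A \<in> carrier G \<and> mcong (q (Suc j)) (rep (Suc j) A) (1 + of_int (q j) * X)"

abbreviation sl2_mod_p :: "m2 \<Rightarrow> bool" where
  "sl2_mod_p X \<equiv> int p dvd mtr X"

lemma level_carrier: "A \<in> level j \<Longrightarrow> A \<in> carrier G"
  by (simp add: level_def)

lemma level_rep: "A \<in> level j \<Longrightarrow> j \<le> n \<Longrightarrow> mcong (q j) (rep n A) 1"
  unfolding level_def using rep_mono mcong_trans by blast

lemma level_0: "level 0 = carrier G"
  by (auto simp: level_def mcong_entries)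

lemma level_1: "level 1 = carrier G"
  using carrier_repD(1) by (auto simp: level_def sl21_seq_def)

lemma level_mono: "i \<le> k \<Longrightarrow> level k \<subseteq> level i"
proof
  fix A assume ik: "i \<le> k" and A: "A \<in> level k"
  have c: "A \<in> carrier G" using A level_carrier by blast
  have "mcong (q i) (rep i A) (rep k A)" by (rule mcong_sym[OF rep_mono[OF c ik]])
  also have "mcong (q i) (rep k A) 1"
    using A by (rule_tac mcong_dvd[of "q k"]) (simp_all add: level_def le_imp_power_dvd ik)
  finally show "A \<in> level i" using c by (simp add: level_def)
qed

lemma one_level: "\<one>\<^bsub>G\<^esub> \<in> level j"
  unfolding level_def using one_carrier rep_one by blast

lemma level_subgroup: "subgroup (level j) G"
proof (rule G.subgroupI)
  show "level j \<subseteq> carrier G" using level_carrier by blast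
  show "level j \<noteq> {}" using one_level by blast
  fix A B assume a: "A \<in> level j" and b: "B \<in> level j"
  have ca: "A \<in> carrier G" and cb: "B \<in> carrier G" using a b level_carrier by blast+
  have "mcong (q j) (rep j (inv\<^bsub>G\<^esub> A)) (adj (rep j A))" by (rule rep_inv[OF ca])
  also have "mcong (q j) \<dots> (adj 1)" using a by (intro mcong_adj) (simp add: level_def)
  finally show "inv\<^bsub>G\<^esub> A \<in> level j" using ca by (simp add: level_def adj_one)
  have "mcong (q j) (rep j (A \<otimes>\<^bsub>G\<^esub> B)) (rep j A * rep j B)" by (rule rep_mult[OF ca cb])
  also have "mcong (q j) \<dots> (1 * 1)" using a b by (intro mcong_mult) (auto simp: level_def)
  finally show "A \<otimes>\<^bsub>G\<^esub> B \<in> level j" using mult_carrier[OF ca cb] by (simp add: level_def)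
qed

lemma level_inv_mult_iff:
  assumes "A \<in> carrier G" "B \<in> carrier G"
  shows "inv\<^bsub>G\<^esub> A \<otimes>\<^bsub>G\<^esub> B \<in> level n \<longleftrightarrow> rep n A = rep n B"
proof -
  have ic: "inv\<^bsub>G\<^esub> A \<in> carrier G" using assms by simp
  have r: "mcong (q n) (rep n (inv\<^bsub>G\<^esub> A \<otimes>\<^bsub>G\<^esub> B)) (adj (rep n A) * rep n B)"
    using mcong_trans[OF rep_mult[OF ic assms(2)] mcong_mult[OF rep_inv[OF assms(1)] mcong_refl]] .
  have dA: "mcong (q n) (of_int (mdet (rep n A))) 1" and dB: "mcong (q n) (of_int (mdet (rep n B))) 1"
    using mcong_of_int[OF mdet_rep] assms by blast+
  have iff: "mcong (q n) (adj (rep n A) * rep n B) 1 \<longleftrightarrow> mcong (q n) (rep n A) (rep n B)"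
  proof
    assume "mcong (q n) (adj (rep n A) * rep n B) 1"
    then have "mcong (q n) (rep n A * (adj (rep n A) * rep n B)) (rep n A * 1)"
      by (rule mcong_mult[OF mcong_refl])
    moreover have "rep n A * (adj (rep n A) * rep n B) = of_int (mdet (rep n A)) * rep n B"
      by (simp add: mult.assoc[symmetric] mult_adj)
    moreover have "mcong (q n) (of_int (mdet (rep n A)) * rep n B) (1 * rep n B)"
      by (rule mcong_mult[OF dA mcong_refl])
    ultimately show "mcong (q n) (rep n A) (rep n B)"
      by (metis mcong_sym mcong_trans mult_1 mult_1_right)
  next
    assume "mcong (q n) (rep n A) (rep n B)"
    then have "mcong (q n) (adj (rep n A) * rep n B) (adj (rep n B) * rep n B)"
      by (intro mcong_mult mcong_adj mcong_refl)
    then have "mcong (q n) (adj (rep n A) * rep n B) (of_int (mdet (rep n B)))"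
      by (simp add: mult_adj)
    then show "mcong (q n) (adj (rep n A) * rep n B) 1"
      using dB by (rule mcong_trans)
  qed
  moreover have "mcong (q n) (rep n (inv\<^bsub>G\<^esub> A \<otimes>\<^bsub>G\<^esub> B)) 1
      \<longleftrightarrow> mcong (q n) (adj (rep n A) * rep n B) 1"
    using r mcong_sym mcong_trans by blast
  moreover have "mcong (q n) (rep n A) (rep n B) \<longleftrightarrow> rep n A = rep n B"
    using rep_eqI[OF assms] by auto
  ultimately show ?thesis
    using mult_carrier[OF ic assms(2)] by (simp add: level_def)
qed

lemma level_Inter_eq_one: "y \<in> carrier G \<Longrightarrow> (\<And>n. y \<in> level n) \<Longrightarrow> y = \<one>\<^bsub>G\<^esub>"
  using level_inv_mult_iff[OF one_carrier] eq_by_rep by (metis G.inv_one G.l_one)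

lemma lead_carrier: "lead j A X \<Longrightarrow> A \<in> carrier G"
  by (simp add: lead_def)

lemma lead_rep:
  "lead j A X \<Longrightarrow> Suc j \<le> n \<Longrightarrow> mcong (q (Suc j)) (rep n A) (1 + of_int (q j) * X)"
  unfolding lead_def using rep_mono mcong_trans by blast

lemma mcong_one_add_lift:
  "mcong (int p) X Y \<Longrightarrow> mcong (q (Suc j)) (1 + of_int (q j) * X) (1 + of_int (q j) * Y)"
  using mcong_add[OF mcong_refl mcong_smult[of "int p" X Y "q j"]] by (simp add: mult.commute)

lemma lead_rep_split:
  assumes "lead j A X" "Suc j \<le> n"
  obtains T where "rep n A = 1 + of_int (q j) * T" "mcong (int p) T X"
proof -
  have "mcong (q j) (rep n A) (1 + of_int (q j) * X)"
    using lead_rep[OF assms] by (rule mcong_dvd) simp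
  then have "mcong (q j) (rep n A) 1"
    using mcong_add_smult mcong_trans by blast
  then obtain T where T: "rep n A = 1 + of_int (q j) * T" by (auto simp: mcong_def)
  have "mcong (q (Suc j)) (of_int (q j) * T) (of_int (q j) * X)"
    using lead_rep[OF assms] unfolding T by (rule mcong_add_cancel)
  then have "mcong (int p) T X"
    by (rule_tac mcong_smult_cancel[of "q j"]) (use q_pos[of j] in \<open>auto simp: mult.commute\<close>)
  with T show thesis by (rule that)
qed

lemma lead_level: "lead j A X \<Longrightarrow> A \<in> level j"
proof -
  assume l: "lead j A X"
  have ca: "A \<in> carrier G" by (rule lead_carrier[OF l])
  have "mcong (q j) (rep j A) (rep (Suc j) A)" by (rule mcong_sym[OF rep_mono[OF ca]]) simp
  also have "mcong (q j) (rep (Suc j) A) (1 + of_int (q j) * X)"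
    using l by (rule_tac mcong_dvd[of "q (Suc j)"]) (simp_all add: lead_def)
  also have "mcong (q j) (1 + of_int (q j) * X) 1" by (rule mcong_add_smult)
  finally show ?thesis using ca by (simp add: level_def)
qed

lemma lead_exists: "A \<in> level j \<Longrightarrow> \<exists>X. lead j A X"
proof -
  assume a: "A \<in> level j"
  have "mcong (q j) (rep (Suc j) A) 1" using level_rep[OF a] by simp
  then obtain C where "rep (Suc j) A = 1 + of_int (q j) * C" unfolding mcong_def by blast
  then have "lead j A C" using a by (simp add: lead_def level_carrier)
  then show ?thesis ..
qed

lemma lead_unique: "lead j A X \<Longrightarrow> lead j A Y \<Longrightarrow> mcong (int p) X Y"
proof -
  assume "lead j A X" "lead j A Y"
  then have "mcong (q (Suc j)) (1 + of_int (q j) * X) (1 + of_int (q j) * Y)"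
    unfolding lead_def using mcong_sym mcong_trans by blast
  then have "mcong (q j * int p) (of_int (q j) * X) (of_int (q j) * Y)"
    by (simp add: mult.commute mcong_add_cancel)
  then show ?thesis using q_pos[of j] by (rule_tac mcong_smult_cancel[of "q j"]) auto
qed

lemma lead_cong: "lead j A X \<Longrightarrow> mcong (int p) X Y \<Longrightarrow> lead j A Y"
  unfolding lead_def using mcong_one_add_lift mcong_trans by blast

lemma level_Suc_iff_lead_zero: "A \<in> level (Suc j) \<longleftrightarrow> lead j A 0"
  unfolding level_def lead_def by simp

lemma lead_zero_level: "lead j A X \<Longrightarrow> mcong (int p) X 0 \<Longrightarrow> A \<in> level (Suc j)"
  using lead_cong level_Suc_iff_lead_zero by blast

lemma lead_one: "lead j \<one>\<^bsub>G\<^esub> 0"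
  using one_level level_Suc_iff_lead_zero by blast

text \<open>From level one on, the factor \<open>p\<^sup>2\<^sup>j\<close> of the cross term vanishes modulo \<open>p\<^sup>j\<^sup>+\<^sup>1\<close>.\<close>

lemma lead_mult:
  assumes j: "1 \<le> j" and a: "lead j A X" and b: "lead j B Y"
  shows "lead j (A \<otimes>\<^bsub>G\<^esub> B) (X + Y)"
proof -
  have c: "A \<in> carrier G" "B \<in> carrier G" using a b lead_carrier by auto
  have "mcong (q (Suc j)) (rep (Suc j) (A \<otimes>\<^bsub>G\<^esub> B)) (rep (Suc j) A * rep (Suc j) B)"
    by (rule rep_mult[OF c])
  also have "mcong (q (Suc j)) \<dots> ((1 + of_int (q j) * X) * (1 + of_int (q j) * Y))"
    using a b by (intro mcong_mult) (auto simp: lead_def)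
  also have "(1 + of_int (q j) * X) * (1 + of_int (q j) * Y) =
      (1 + of_int (q j) * (X + Y)) + of_int (q (Suc j)) * (of_int (int p ^ (j - 1)) * (X * Y))"
  proof -
    have e: "q j * q j = q (Suc j) * int p ^ (j - 1)"
      using j by (simp add: power_add[symmetric] power_Suc[symmetric] del: power_Suc)
    have "(1 + of_int (q j) * X) * (1 + of_int (q j) * Y) =
      (1 + of_int (q j) * (X + Y)) + of_int (q j * q j) * (X * Y)"
      by (cases X; cases Y) (simp add: algebra_simps of_int_m2)
    then show ?thesis
      unfolding e by (simp add: mult.assoc of_int_mult del: of_int_m2)
  qed
  also have "mcong (q (Suc j)) \<dots> (1 + of_int (q j) * (X + Y))"
    by (rule mcong_add_smult)
  finally show ?thesis using mult_carrier[OF c] by (simp add: lead_def)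
qed

lemma lead_inv: "1 \<le> j \<Longrightarrow> lead j A X \<Longrightarrow> lead j (inv\<^bsub>G\<^esub> A) (- X)"
proof -
  assume j: "1 \<le> j" and a: "lead j A X"
  have ca: "A \<in> carrier G" using a lead_carrier by blast
  have "inv\<^bsub>G\<^esub> A \<in> level j"
    by (rule subgroup.m_inv_closed[OF level_subgroup lead_level[OF a]])
  then obtain Y where y: "lead j (inv\<^bsub>G\<^esub> A) Y" using lead_exists by blast
  have "lead j (inv\<^bsub>G\<^esub> A \<otimes>\<^bsub>G\<^esub> A) (Y + X)" by (rule lead_mult[OF j y a])
  moreover have "inv\<^bsub>G\<^esub> A \<otimes>\<^bsub>G\<^esub> A = \<one>\<^bsub>G\<^esub>" by (rule G.l_inv[OF ca])
  ultimately have "mcong (int p) (Y + X) 0"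
    using lead_unique[OF _ lead_one] by simp
  then have "mcong (int p) (Y + X - X) (0 - X)" by (rule mcong_diff) (rule mcong_refl)
  then have "mcong (int p) Y (- X)" by simp
  then show ?thesis by (rule lead_cong[OF y])
qed

lemma lead_via_level:
  assumes "1 \<le> j" "lead j A X" "B \<in> carrier G" "inv\<^bsub>G\<^esub> A \<otimes>\<^bsub>G\<^esub> B \<in> level (Suc j)"
  shows "lead j B X"
proof -
  have "A \<in> carrier G" using assms(2) lead_carrier by blast
  then have "A \<otimes>\<^bsub>G\<^esub> (inv\<^bsub>G\<^esub> A \<otimes>\<^bsub>G\<^esub> B) = B" using assms(3) by (simp add: G.m_assoc[symmetric])
  then show ?thesis
    using lead_mult[OF assms(1,2) iffD1[OF level_Suc_iff_lead_zero assms(4)]] by simp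
qed

lemma lead_pow_nat: "1 \<le> j \<Longrightarrow> lead j A X \<Longrightarrow> lead j (A [^]\<^bsub>G\<^esub> (k::nat)) (of_nat k * X)"
proof (induction k)
  case 0
  then show ?case using lead_one by simp
next
  case (Suc k)
  have "lead j (A [^]\<^bsub>G\<^esub> k \<otimes>\<^bsub>G\<^esub> A) (of_nat k * X + X)"
    by (rule lead_mult[OF Suc.prems(1) Suc.IH[OF Suc.prems] Suc.prems(2)])
  then show ?case by (simp add: algebra_simps)
qed

lemma lead_sl2_mod_p: "1 \<le> j \<Longrightarrow> lead j A X \<Longrightarrow> sl2_mod_p X"
proof -
  assume j: "1 \<le> j" and a: "lead j A X"
  have "q (Suc j) dvd (mdet (rep (Suc j) A) - 1)"
    using a lead_carrier mdet_rep by blast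
  moreover have "q (Suc j) dvd (mdet (rep (Suc j) A) - mdet (1 + of_int (q j) * X))"
    using a by (intro mcong_mdet) (simp add: lead_def)
  ultimately have "q (Suc j) dvd ((mdet (rep (Suc j) A) - 1)
      - (mdet (rep (Suc j) A) - mdet (1 + of_int (q j) * X)))"
    by (rule dvd_diff)
  then have d: "q (Suc j) dvd (mdet (1 + of_int (q j) * X) - 1)" by simp
  have e: "mdet (1 + of_int (q j) * X) - 1 = q j * mtr X + q (j + j) * mdet X"
    by (cases X) (simp add: mdet_def mtr_def algebra_simps m2_zero_one of_int_m2 power_add)
  have "q (Suc j) dvd q (j + j) * mdet X"
    using j by (intro dvd_mult2 le_imp_power_dvd) simp
  then have "q j * int p dvd q j * mtr X"
    using d unfolding e by (simp add: dvd_add_left_iff mult.commute)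
  then show ?thesis using q_pos[of j] p_ge3 by simp
qed

lemma lead_of_m2:
  assumes "1 \<le> j" "mdet (1 + of_int (q j) * X) = 1"
  shows "\<exists>A. lead j A X"
proof -
  have "int p dvd q j" using assms(1) by (simp add: dvd_power)
  then have "sl21_seq (\<lambda>_. 1 + of_int (q j) * X)"
    using assms(2) by (intro sl21_seq_const mcong_dvd[OF mcong_add_smult])
  then have "lead j (ofseq p (\<lambda>_. 1 + of_int (q j) * X)) X"
    unfolding lead_def rep_ofseq using ofseq_carrier mcong_mmod by blast
  then show ?thesis ..
qed

text \<open>Three one-parameter families of elementary matrices already realise every traceless
  leading term.\<close>

lemma lead_surj: "1 \<le> j \<Longrightarrow> sl2_mod_p X \<Longrightarrow> \<exists>A. lead j A X"
proof -
  assume j: "1 \<le> j" and t: "sl2_mod_p X"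
  obtain a b c d where X: "X = M2 a b c d" by (cases X)
  have "mdet (1 + of_int (q j) * M2 0 (b - a) 0 0) = 1"
    "mdet (1 + of_int (q j) * M2 0 0 (c + a) 0) = 1"
    "mdet (1 + of_int (q j) * M2 a a (- a) (- a)) = 1"
    by (simp_all add: mdet_def of_int_m2 m2_zero_one algebra_simps)
  then obtain E F H where "lead j E (M2 0 (b - a) 0 0)" "lead j F (M2 0 0 (c + a) 0)"
      "lead j H (M2 a a (- a) (- a))"
    using lead_of_m2[OF j] by meson
  then have "lead j (E \<otimes>\<^bsub>G\<^esub> F \<otimes>\<^bsub>G\<^esub> H) (M2 0 (b - a) 0 0 + M2 0 0 (c + a) 0 + M2 a a (- a) (- a))"
    by (intro lead_mult[OF j]) 
  moreover have "mcong (int p) (M2 0 (b - a) 0 0 + M2 0 0 (c + a) 0 + M2 a a (- a) (- a)) X"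
  proof -
    have "int p dvd (a + d)" using t by (simp add: X mtr_def)
    then have "int p dvd (- a - d)" by (metis minus_add_distrib dvd_minus_iff diff_conv_add_uminus)
    then show ?thesis by (simp add: X mcong_entries)
  qed
  ultimately show ?thesis using lead_cong by blast
qed

lemma exists_lead1: "sl2_mod_p X \<Longrightarrow> \<exists>A. lead 1 A X"
  using lead_surj by simp

text \<open>Binomial expansion: \<open>(1 + p\<^sup>j T)\<^sup>p \<equiv> 1 + p\<^sup>j\<^sup>+\<^sup>1 T (mod p\<^sup>j\<^sup>+\<^sup>2)\<close>, using \<open>p dvd (p choose 2)\<close>
  (here \<open>p\<close> odd matters) and \<open>3j \<ge> j + 2\<close>.\<close>

lemma lead_pow: "1 \<le> j \<Longrightarrow> lead j A X \<Longrightarrow> lead (Suc j) (A [^]\<^bsub>G\<^esub> p) X"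
proof -
  assume j: "1 \<le> j" and a: "lead j A X"
  have ca: "A \<in> carrier G" by (rule lead_carrier[OF a])
  obtain T where T: "rep (Suc (Suc j)) A = 1 + of_int (q j) * T" and TX: "mcong (int p) T X"
    using lead_rep_split[OF a, of "Suc (Suc j)"] by auto
  obtain R where R: "(1 + of_int (q j) * T :: m2) ^ p = 1 + of_int (int p * q j) * T
     + of_int (int (p choose 2) * (q j)^2) * (T * T) + of_int ((q j)^3) * R"
    using binomial_m2 by blast
  have e: "int p * (q j)^2 = int p ^ (1 + 2 * j)" "(q j)^3 = int p ^ (3 * j)"
    by (simp_all add: power_mult[symmetric] mult.commute)
  have d: "q (Suc (Suc j)) dvd int p * (q j)^2" "q (Suc (Suc j)) dvd (q j)^3"
    unfolding e by (rule le_imp_power_dvd; use j in simp)+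
  have "int p dvd int (p choose 2)"
    using prime_p p_ge3 by (simp add: dvd_choose_prime)
  then have "q (Suc (Suc j)) dvd int (p choose 2) * (q j)^2"
    using d(1) by (meson dvd_trans mult_dvd_mono dvd_refl)
  then obtain u where u: "int (p choose 2) * (q j)^2 = q (Suc (Suc j)) * u" by (auto elim: dvdE)
  obtain v where v: "(q j)^3 = q (Suc (Suc j)) * v" using d(2) by (auto elim: dvdE)
  have "mcong (q (Suc (Suc j))) (rep (Suc (Suc j)) (A [^]\<^bsub>G\<^esub> p)) (rep (Suc (Suc j)) A ^ p)"
    by (rule rep_pow[OF ca])
  also have "rep (Suc (Suc j)) A ^ p = 1 + of_int (q (Suc j)) * T
      + of_int (q (Suc (Suc j))) * (of_int u * (T * T) + of_int v * R)"
    unfolding T R u v by (simp only: of_int_mult mult.assoc distrib_left add.assoc power_Suc)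
  also have "mcong (q (Suc (Suc j))) \<dots> (1 + of_int (q (Suc j)) * T)"
    by (rule mcong_add_smult)
  also have "mcong (q (Suc (Suc j))) \<dots> (1 + of_int (q (Suc j)) * X)"
    by (rule mcong_one_add_lift[OF TX])
  finally show ?thesis unfolding lead_def using ca by simp
qed

lemma pow_level: "1 \<le> j \<Longrightarrow> y \<in> level j \<Longrightarrow> y [^]\<^bsub>G\<^esub> p \<in> level (Suc j)"
  using lead_exists lead_level lead_pow by blast

definition comm :: "mat2 \<Rightarrow> mat2 \<Rightarrow> mat2" where
  "comm A B = inv\<^bsub>G\<^esub> A \<otimes>\<^bsub>G\<^esub> inv\<^bsub>G\<^esub> B \<otimes>\<^bsub>G\<^esub> A \<otimes>\<^bsub>G\<^esub> B"

lemma comm_carrier: "A \<in> carrier G \<Longrightarrow> B \<in> carrier G \<Longrightarrow> comm A B \<in> carrier G"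
  unfolding comm_def by simp

lemma rep_comm:
  assumes "A \<in> carrier G" "B \<in> carrier G"
  shows "mcong (q n) (rep n (comm A B)) (adj (rep n A) * adj (rep n B) * rep n A * rep n B)"
proof -
  have "mcong (q n) (rep n (comm A B)) (rep n (inv\<^bsub>G\<^esub> A \<otimes>\<^bsub>G\<^esub> inv\<^bsub>G\<^esub> B \<otimes>\<^bsub>G\<^esub> A) * rep n B)"
    unfolding comm_def by (rule rep_mult) (use assms in simp_all)
  also have "mcong (q n) \<dots> (rep n (inv\<^bsub>G\<^esub> A) * rep n (inv\<^bsub>G\<^esub> B) * rep n A * rep n B)"
    by (rule mcong_mult[OF rep_mult3(1) mcong_refl]) (use assms in simp_all)
  also have "mcong (q n) \<dots> (adj (rep n A) * adj (rep n B) * rep n A * rep n B)"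
    by (intro mcong_mult rep_inv assms mcong_refl)
  finally show ?thesis .
qed

lemma lead_comm:
  assumes a: "lead 1 A X" and b: "lead 1 B Y"
  shows "lead 2 (comm A B) (bracket X Y)"
proof -
  have ca: "A \<in> carrier G" and cb: "B \<in> carrier G" using a b lead_carrier by auto
  obtain T where T: "rep 3 A = 1 + of_int (int p) * T" "mcong (int p) T X"
    using lead_rep_split[OF a, of 3] by auto
  obtain U where U: "rep 3 B = 1 + of_int (int p) * U" "mcong (int p) U Y"
    using lead_rep_split[OF b, of 3] by auto
  define a' where "a' = rep 3 A"
  define b' where "b' = rep 3 B"
  have "mcong (q 3) (rep 3 (comm A B)) (adj a' * adj b' * a' * b')"
    unfolding a'_def b'_def by (rule rep_comm[OF ca cb])
  also have "adj a' * adj b' * a' * b' = of_int (mdet a' * mdet b') + adj a' * adj b' * bracket a' b'"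
    by (rule commutator_m2)
  also have "bracket a' b' = of_int (q 2) * bracket T U"
    unfolding a'_def b'_def T(1) U(1) bracket_one_add_smult by (simp add: power2_eq_square)
  also have "mcong (q 3) (of_int (mdet a' * mdet b') + adj a' * adj b' * (of_int (q 2) * bracket T U))
     (1 + of_int (q 2) * bracket T U)"
  proof (rule mcong_add)
    show "mcong (q 3) (of_int (mdet a' * mdet b')) 1"
      using mcong_mult[OF mcong_of_int mcong_of_int, of "q 3" "mdet a'" "mdet b'"]
        mdet_rep[OF ca] mdet_rep[OF cb] by (simp add: a'_def b'_def)
    have "mcong (int p) (adj a' * adj b') (1 * 1)"
      unfolding a'_def b'_def T(1) U(1) adj_add adj_smult adj_one
      by (intro mcong_mult mcong_add_smult)
    then have "mcong (int p * q 2) (adj a' * adj b' * (of_int (q 2) * bracket T U))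
        (of_int (q 2) * bracket T U)"
      by (intro mcong_mult_smult) simp
    then show "mcong (q 3) (adj a' * adj b' * (of_int (q 2) * bracket T U)) (of_int (q 2) * bracket T U)"
      by (simp add: numeral_3_eq_3 numeral_2_eq_2)
  qed
  also have "mcong (q 3) (1 + of_int (q 2) * bracket T U) (1 + of_int (q 2) * bracket X Y)"
    using mcong_one_add_lift[OF mcong_bracket[OF T(2) U(2)], of 2]
    by (simp add: numeral_3_eq_3 numeral_2_eq_2)
  finally show ?thesis unfolding lead_def using comm_carrier[OF ca cb]
    by (simp add: numeral_3_eq_3 numeral_2_eq_2)
qed

end

section \<open>Linear algebra in \<open>sl\<^sub>2(\<bbbF>\<^sub>p)\<close>\<close>

definition traceless :: "m2 \<Rightarrow> m2" where
  "traceless X = M2 (e11 X) (e12 X) (e21 X) (- e11 X)"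

lemma bracket_bracket_traceless:
  "bracket (traceless X) (bracket (traceless Y) (traceless Z)) =
     of_int (2 * mtr (traceless X * traceless Y)) * traceless Z
   - of_int (2 * mtr (traceless X * traceless Z)) * traceless Y"
  by (cases X; cases Y; cases Z) (simp add: bracket_def traceless_def mtr_def of_int_m2 algebra_simps)

lemma bracket_traceless_M2:
  "bracket (M2 a b c (- a)) (M2 a' b' c' (- a')) = M2 (b * c' - b' * c)
     (2 * (a * b' - a' * b)) (2 * (c * a' - a * c')) (- (b * c' - b' * c))"
  by (simp add: bracket_def algebra_simps)

lemma mcong_smult_zero: "q dvd k \<Longrightarrow> mcong q (of_int k * Z) 0"
  using mcong_scalars[of q k 0 Z Z] by simp

context odd_prime
begin

lemma prime_int_p: "prime (int p)"
  using prime_p by simp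

lemma mcong_traceless: "sl2_mod_p X \<Longrightarrow> mcong (int p) X (traceless X)"
  by (cases X) (simp add: mcong_entries traceless_def mtr_def add.commute)

lemma mcong_eq_neg_imp_zero: "mcong (int p) X (- X) \<Longrightarrow> mcong (int p) X 0"
proof -
  assume "mcong (int p) X (- X)"
  moreover obtain a b c d where X: "X = M2 a b c d" by (cases X)
  ultimately have "int p dvd 2 * a" "int p dvd 2 * b" "int p dvd 2 * c" "int p dvd 2 * d"
    by (simp_all add: mcong_entries)
  then have "int p dvd a" "int p dvd b" "int p dvd c" "int p dvd d"
    by (simp_all add: p_dvd_2_times_iff)
  then show ?thesis by (simp add: X mcong_entries)
qed

lemma mcong_smult_zero_imp_dvd:
  assumes "mcong (int p) (of_int k * Z) 0" "\<not> mcong (int p) Z 0"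
  shows "int p dvd k"
proof -
  obtain z1 z2 z3 z4 where Z: "Z = M2 z1 z2 z3 z4" by (cases Z)
  have "int p dvd k * z1" "int p dvd k * z2" "int p dvd k * z3" "int p dvd k * z4"
    using assms(1) by (simp_all add: Z mcong_entries of_int_m2)
  moreover have "\<not> (int p dvd z1 \<and> int p dvd z2 \<and> int p dvd z3 \<and> int p dvd z4)"
    using assms(2) by (simp add: Z mcong_entries)
  ultimately show ?thesis using prime_dvd_mult_iff[OF prime_int_p] by blast
qed

lemma exists_inverse_mod_p: "\<not> int p dvd x \<Longrightarrow> \<exists>u. int p dvd (x * u - 1)"
proof -
  assume "\<not> int p dvd x"
  then have "gcd x (int p) = 1"
    using prime_imp_coprime[OF prime_int_p] by (simp add: coprime_iff_gcd_eq_1 gcd.commute)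
  moreover obtain u v where "u * x + v * int p = gcd x (int p)" using bezout_int by blast
  ultimately have "u * x + v * int p = 1" by simp
  then have "x * u - 1 = int p * (- v)" by (simp add: algebra_simps)
  then show ?thesis by (metis dvd_triv_left)
qed

lemma bracket_mod_p_expand:
  assumes "sl2_mod_p X" "sl2_mod_p Y" "sl2_mod_p Z"
  shows "mcong (int p) (bracket X (bracket Y Z))
           (of_int (2 * mtr (X * Y)) * Z - of_int (2 * mtr (X * Z)) * Y)"
proof -
  have cx: "mcong (int p) X (traceless X)" and cy: "mcong (int p) Y (traceless Y)"
    and cz: "mcong (int p) Z (traceless Z)"
    using assms mcong_traceless by auto
  have tr: "int p dvd (2 * mtr (traceless A * traceless B) - 2 * mtr (A * B))"
    if "mcong (int p) A (traceless A)" "mcong (int p) B (traceless B)" for A B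
  proof -
    have "int p dvd (mtr (traceless A * traceless B) - mtr (A * B))"
      using mcong_mtr[OF mcong_mult[OF mcong_sym[OF that(1)] mcong_sym[OF that(2)]]] .
    then have "int p dvd 2 * (mtr (traceless A * traceless B) - mtr (A * B))"
      by (rule dvd_mult)
    then show ?thesis by (simp only: right_diff_distrib)
  qed
  have "mcong (int p) (bracket X (bracket Y Z))
      (bracket (traceless X) (bracket (traceless Y) (traceless Z)))"
    by (intro mcong_bracket cx cy cz)
  also have "\<dots> = of_int (2 * mtr (traceless X * traceless Y)) * traceless Z
      - of_int (2 * mtr (traceless X * traceless Z)) * traceless Y"
    by (rule bracket_bracket_traceless)
  also have "mcong (int p) \<dots> (of_int (2 * mtr (X * Y)) * Z - of_int (2 * mtr (X * Z)) * Y)"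
    using cx cy cz by (intro mcong_diff mcong_scalars tr) (simp_all add: mcong_sym)
  finally show ?thesis .
qed

lemma proportional_mod_p:
  assumes "\<not> int p dvd a" "int p dvd (a * b' - a' * b)" "int p dvd (a * c' - a' * c)"
  shows "\<exists>l. int p dvd (a' - l * a) \<and> int p dvd (b' - l * b) \<and> int p dvd (c' - l * c)"
proof -
  obtain u where u: "int p dvd (a * u - 1)" using exists_inverse_mod_p[OF assms(1)] by blast
  have "a' - a' * u * a = - a' * (a * u - 1)"
    "b' - a' * u * b = - b' * (a * u - 1) + u * (a * b' - a' * b)"
    "c' - a' * u * c = - c' * (a * u - 1) + u * (a * c' - a' * c)"
    by (simp_all add: algebra_simps)
  then show ?thesis using u assms(2,3) by (intro exI[of _ "a' * u"]) simp
qed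

lemma cross_product_zero_imp_proportional:
  assumes nz: "\<not> (int p dvd a \<and> int p dvd b \<and> int p dvd c)"
    and m: "int p dvd (b * c' - b' * c)" "int p dvd (a * b' - a' * b)" "int p dvd (c * a' - a * c')"
  shows "\<exists>l. int p dvd (a' - l * a) \<and> int p dvd (b' - l * b) \<and> int p dvd (c' - l * c)"
proof -
  have neg: "int p dvd (y - x)" if "int p dvd (x - y)" for x y :: int
    using that by (simp add: dvd_diff_commute)
  consider "\<not> int p dvd a" | "\<not> int p dvd b" | "\<not> int p dvd c" using nz by blast
  then show ?thesis
  proof cases
    case 1
    have "int p dvd (a * c' - a' * c)" using neg[OF m(3)] by (simp add: mult.commute)
    then show ?thesis using proportional_mod_p[OF 1 m(2)] by blast
  next
    case 2
    have "int p dvd (b * a' - b' * a)" using neg[OF m(2)] by (simp add: mult.commute)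
    then show ?thesis using proportional_mod_p[OF 2 m(1)] by blast
  next
    case 3
    have "int p dvd (c * a' - c' * a)" "int p dvd (c * b' - c' * b)"
      using m(3) neg[OF m(1)] by (simp_all add: mult.commute)
    then show ?thesis using proportional_mod_p[OF 3] by blast
  qed
qed

text \<open>The centraliser of a nonzero element of \<open>sl\<^sub>2(\<bbbF>\<^sub>p)\<close> is the line it spans: for
  traceless matrices the bracket is, up to factors \<open>2\<close>, the cross product of the entries
  \<open>(a, b, c)\<close>.\<close>

lemma bracket_zero_imp_proportional:
  assumes tA: "sl2_mod_p A" and tB: "sl2_mod_p B" and nz: "\<not> mcong (int p) A 0"
    and c: "mcong (int p) (bracket A B) 0"
  shows "\<exists>l. mcong (int p) B (of_int l * A)"
proof -
  have cA: "mcong (int p) A (traceless A)" and cB: "mcong (int p) B (traceless B)"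
    using tA tB mcong_traceless by auto
  obtain a b c where A: "traceless A = M2 a b c (- a)" by (simp add: traceless_def)
  obtain a' b' c' where B: "traceless B = M2 a' b' c' (- a')" by (simp add: traceless_def)
  have "mcong (int p) (bracket (traceless A) (traceless B)) (bracket A B)"
    by (intro mcong_bracket mcong_sym[OF cA] mcong_sym[OF cB])
  then have "mcong (int p) (bracket (traceless A) (traceless B)) 0"
    using c mcong_trans by blast
  then have "int p dvd (b * c' - b' * c)" "int p dvd 2 * (a * b' - a' * b)"
    "int p dvd 2 * (c * a' - a * c')"
    unfolding A B bracket_traceless_M2 mcong_entries by auto
  then have m: "int p dvd (b * c' - b' * c)" "int p dvd (a * b' - a' * b)"
    "int p dvd (c * a' - a * c')"
    by (simp_all only: p_dvd_2_times_iff)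
  have "\<not> mcong (int p) (traceless A) 0"
    using nz cA mcong_trans by blast
  then have "\<not> (int p dvd a \<and> int p dvd b \<and> int p dvd c)"
    unfolding A mcong_entries by auto
  then obtain l where "int p dvd (a' - l * a)" "int p dvd (b' - l * b)" "int p dvd (c' - l * c)"
    using cross_product_zero_imp_proportional[OF _ m] by blast
  moreover have "- a' - l * - a = - (a' - l * a)" by simp
  with calculation(1) have "int p dvd (- a' - l * - a)" by (simp only: dvd_minus_iff)
  ultimately have "mcong (int p) (traceless B) (of_int l * traceless A)"
    unfolding A B mcong_entries of_int_m2 by simp
  then have "mcong (int p) B (of_int l * A)"
    using mcong_trans[OF cB] mcong_trans[OF _ mcong_mult[OF mcong_refl mcong_sym[OF cA]]] by blast
  then show ?thesis ..
qed

lemma not_dvd_scalar_entries: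
  assumes "int p dvd (u - l * x)" "int p dvd u" "\<not> int p dvd x"
    and "int p dvd (v - l * y)" "\<not> int p dvd v"
  shows False
proof -
  have "int p dvd u - (u - l * x)" using assms(1,2) by (rule dvd_diff[rotated])
  then have "int p dvd l" using assms(3) prime_dvd_mult_iff[OF prime_int_p] by simp
  then have "int p dvd l * y" by simp
  with assms(4) have "int p dvd (v - l * y) + l * y" by (rule dvd_add)
  with assms(5) show False by simp
qed

text \<open>No line of \<open>sl\<^sub>2(\<bbbF>\<^sub>p)\<close> is normalised by both root vectors \<open>E\<^sub>1\<^sub>2\<close> and \<open>E\<^sub>2\<^sub>1\<close>.\<close>

lemma exists_bracket_off_line:
  assumes t: "sl2_mod_p X0" and nz: "\<not> mcong (int p) X0 0"
  shows "\<exists>Y. sl2_mod_p Y \<and> (\<forall>l. \<not> mcong (int p) (bracket Y X0) (of_int l * X0))"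
proof -
  obtain x1 x2 x3 x4 where X: "X0 = M2 x1 x2 x3 x4" by (cases X0)
  have t': "int p dvd (x1 + x4)" using t by (simp add: X mtr_def)
  have E12: "int p dvd (x3 - l * x1)" "int p dvd (x4 - x1 - l * x2)" "int p dvd (0 - l * x3)"
    if "mcong (int p) (bracket (M2 0 1 0 0) X0) (of_int l * X0)" for l
    using that by (simp_all add: X bracket_def mcong_entries of_int_m2)
  have E21: "int p dvd (- x2 - l * x1)" "int p dvd (0 - l * x2)"
    if "mcong (int p) (bracket (M2 0 0 1 0) X0) (of_int l * X0)" for l
    using that by (simp_all add: X bracket_def mcong_entries of_int_m2)
  have tr: "sl2_mod_p (M2 0 1 0 0)" "sl2_mod_p (M2 0 0 1 0)" by (simp_all add: mtr_def)
  consider "\<not> int p dvd x2" | "\<not> int p dvd x3" | "int p dvd x2" "int p dvd x3" by blast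
  then show ?thesis
  proof cases
    case 1
    then show ?thesis
      using not_dvd_scalar_entries[OF E21(2) _ 1 E21(1)] tr(2) by fastforce
  next
    case 2
    then show ?thesis
      using not_dvd_scalar_entries[OF E12(3) _ 2 E12(1)] tr(1) by fastforce
  next
    case 3
    have "\<not> int p dvd x1"
    proof
      assume "int p dvd x1"
      moreover from this have "int p dvd x4" using t' by (metis add_diff_cancel_left' dvd_diff)
      ultimately show False using nz 3 by (simp add: X mcong_entries)
    qed
    moreover have "\<not> int p dvd (x4 - x1)"
    proof
      assume "int p dvd (x4 - x1)"
      with t' have "int p dvd (x1 + x4) - (x4 - x1)" by (rule dvd_diff)
      then show False using \<open>\<not> int p dvd x1\<close> by (simp add: p_dvd_2_times_iff flip: mult_2)
    qed
    ultimately show ?thesis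
      using not_dvd_scalar_entries[OF E12(1) 3(2) _ E12(2)] 3(1) tr(1) by fastforce
  qed
qed

end

section \<open>Continuous involutions preserve the filtration\<close>

locale sl21_involution = odd_prime +
  fixes \<sigma> :: "mat2 \<Rightarrow> mat2"
  assumes cont_aut: "continuous_aut p \<sigma>"
    and invol: "\<forall>g\<in>carrier (Sl21 p). \<sigma> (\<sigma> g) = g"
    and nontriv: "\<exists>g\<in>carrier (Sl21 p). \<sigma> g \<noteq> g"
begin

sublocale sigma: group_hom G G \<sigma>
  using cont_aut group_G by (simp add: group_hom_def group_hom_axioms_def continuous_aut_def iso_def)

lemma sigma_carrier: "A \<in> carrier G \<Longrightarrow> \<sigma> A \<in> carrier G"
  by simp

lemma sigma_continuous:
  "\<exists>m. \<forall>g\<in>carrier G. \<forall>h\<in>carrier G. rep m g = rep m h \<longrightarrow> rep n (\<sigma> g) = rep n (\<sigma> h)"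
  using cont_aut unfolding continuous_aut_def red_eq_iff_rep_eq by blast

lemma sigma_inv_mult_sigma:
  assumes "y \<in> carrier G"
  shows "\<sigma> (inv\<^bsub>G\<^esub> y \<otimes>\<^bsub>G\<^esub> \<sigma> y) = inv\<^bsub>G\<^esub> (inv\<^bsub>G\<^esub> y \<otimes>\<^bsub>G\<^esub> \<sigma> y)"
  using assms invol by (simp add: G.inv_mult_group)

inductive_set ppow_prods :: "nat \<Rightarrow> mat2 set" for j where
  one: "\<one>\<^bsub>G\<^esub> \<in> ppow_prods j"
| mult_ppow: "w \<in> ppow_prods j \<Longrightarrow> y \<in> level j \<Longrightarrow> w \<otimes>\<^bsub>G\<^esub> y [^]\<^bsub>G\<^esub> p \<in> ppow_prods j"

lemma ppow_prods_level: "w \<in> ppow_prods j \<Longrightarrow> 1 \<le> j \<Longrightarrow> w \<in> level (Suc j)"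
proof (induction w rule: ppow_prods.induct)
  case one
  show ?case by (rule one_level)
next
  case (mult_ppow w y)
  then show ?case using subgroup.m_closed[OF level_subgroup] pow_level by blast
qed

lemma level_approx_by_ppow_prods:
  assumes j: "1 \<le> j" and x: "x \<in> level (Suc j)"
  shows "Suc j \<le> m \<Longrightarrow> \<exists>w\<in>ppow_prods j. inv\<^bsub>G\<^esub> w \<otimes>\<^bsub>G\<^esub> x \<in> level m"
proof (induction m rule: nat_induct_at_least)
  case base
  have "inv\<^bsub>G\<^esub> \<one>\<^bsub>G\<^esub> \<otimes>\<^bsub>G\<^esub> x = x" using x level_carrier by simp
  then show ?case using ppow_prods.one x by metis
next
  case (Suc m)
  then obtain w where w: "w \<in> ppow_prods j" "inv\<^bsub>G\<^esub> w \<otimes>\<^bsub>G\<^esub> x \<in> level m" by blast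
  have m1: "1 \<le> m" "1 \<le> m - 1" using Suc j by auto
  obtain R where R: "lead m (inv\<^bsub>G\<^esub> w \<otimes>\<^bsub>G\<^esub> x) R" using lead_exists[OF w(2)] by blast
  obtain y where y: "lead (m - 1) y R"
    using lead_surj[OF m1(2) lead_sl2_mod_p[OF m1(1) R]] by blast
  have yp: "lead m (y [^]\<^bsub>G\<^esub> p) R" using lead_pow[OF m1(2) y] m1 by simp
  have "j \<le> m - 1" using Suc by simp
  then have "y \<in> level j"
    using lead_level[OF y] level_mono[of j "m - 1"] by blast
  then have w': "w \<otimes>\<^bsub>G\<^esub> y [^]\<^bsub>G\<^esub> p \<in> ppow_prods j"
    by (rule ppow_prods.mult_ppow[OF w(1)])
  have "lead m (inv\<^bsub>G\<^esub> (y [^]\<^bsub>G\<^esub> p) \<otimes>\<^bsub>G\<^esub> (inv\<^bsub>G\<^esub> w \<otimes>\<^bsub>G\<^esub> x)) (- R + R)"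
    by (rule lead_mult[OF m1(1) lead_inv[OF m1(1) yp] R])
  then have "inv\<^bsub>G\<^esub> (y [^]\<^bsub>G\<^esub> p) \<otimes>\<^bsub>G\<^esub> (inv\<^bsub>G\<^esub> w \<otimes>\<^bsub>G\<^esub> x) \<in> level (Suc m)"
    by (rule lead_zero_level) simp
  moreover have "inv\<^bsub>G\<^esub> (w \<otimes>\<^bsub>G\<^esub> y [^]\<^bsub>G\<^esub> p) \<otimes>\<^bsub>G\<^esub> x
      = inv\<^bsub>G\<^esub> (y [^]\<^bsub>G\<^esub> p) \<otimes>\<^bsub>G\<^esub> (inv\<^bsub>G\<^esub> w \<otimes>\<^bsub>G\<^esub> x)"
    using ppow_prods_level[OF w(1) j] level_carrier x lead_carrier[OF yp]
    by (simp add: G.inv_mult_group G.m_assoc)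
  ultimately show ?case using w' by metis
qed

lemma sigma_ppow_prods:
  "w \<in> ppow_prods j \<Longrightarrow> \<sigma> ` level j \<subseteq> level j \<Longrightarrow> 1 \<le> j \<Longrightarrow> \<sigma> w \<in> ppow_prods j"
proof (induction w rule: ppow_prods.induct)
  case one
  then show ?case using ppow_prods.one by simp
next
  case (mult_ppow w y)
  have "w \<in> carrier G" "y \<in> carrier G"
    using ppow_prods_level[OF mult_ppow.hyps(1) mult_ppow.prems(2)] mult_ppow.hyps(2) level_carrier
    by blast+
  then have "\<sigma> (w \<otimes>\<^bsub>G\<^esub> y [^]\<^bsub>G\<^esub> p) = \<sigma> w \<otimes>\<^bsub>G\<^esub> \<sigma> y [^]\<^bsub>G\<^esub> p"
    by (simp add: sigma.hom_nat_pow)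
  moreover have "\<sigma> y \<in> level j" using mult_ppow.hyps(2) mult_ppow.prems(1) by blast
  ultimately show ?case
    using ppow_prods.mult_ppow[OF mult_ppow.IH[OF mult_ppow.prems]] by simp
qed

text \<open>The products of \<open>p\<close>-th powers of elements of \<open>\<Gamma>\<^sub>i\<close> are dense in \<open>\<Gamma>\<^sub>i\<^sub>+\<^sub>1\<close>, and \<open>\<sigma>\<close>
  maps them into themselves if it preserves \<open>\<Gamma>\<^sub>i\<close>.\<close>

lemma sigma_level_Suc:
  assumes i: "1 \<le> i" and IH: "\<sigma> ` level i \<subseteq> level i" and x: "x \<in> level (Suc i)"
  shows "\<sigma> x \<in> level (Suc i)"
proof -
  have xc: "x \<in> carrier G" using x level_carrier by blast
  obtain m0 where m0: "\<forall>g\<in>carrier G. \<forall>h\<in>carrier G. rep m0 g = rep m0 h \<longrightarrow>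
      rep (Suc i) (\<sigma> g) = rep (Suc i) (\<sigma> h)"
    using sigma_continuous by blast
  define m where "m = max m0 (Suc i)"
  have "Suc i \<le> m" unfolding m_def by simp
  then obtain w where w: "w \<in> ppow_prods i" "inv\<^bsub>G\<^esub> w \<otimes>\<^bsub>G\<^esub> x \<in> level m"
    using level_approx_by_ppow_prods[OF i x] by blast
  have wc: "w \<in> carrier G" using ppow_prods_level[OF w(1) i] level_carrier by blast
  have "m0 \<le> m" unfolding m_def by simp
  then have "inv\<^bsub>G\<^esub> w \<otimes>\<^bsub>G\<^esub> x \<in> level m0" using w(2) level_mono by blast
  then have "rep m0 w = rep m0 x" by (rule iffD1[OF level_inv_mult_iff[OF wc xc]])
  then have "rep (Suc i) (\<sigma> w) = rep (Suc i) (\<sigma> x)" using m0 wc xc by blast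
  then have "inv\<^bsub>G\<^esub> (\<sigma> w) \<otimes>\<^bsub>G\<^esub> \<sigma> x \<in> level (Suc i)"
    by (rule iffD2[OF level_inv_mult_iff[OF sigma_carrier[OF wc] sigma_carrier[OF xc]]])
  moreover have "\<sigma> w \<in> level (Suc i)"
    using ppow_prods_level[OF sigma_ppow_prods[OF w(1) IH i] i] .
  ultimately have "\<sigma> w \<otimes>\<^bsub>G\<^esub> (inv\<^bsub>G\<^esub> (\<sigma> w) \<otimes>\<^bsub>G\<^esub> \<sigma> x) \<in> level (Suc i)"
    using subgroup.m_closed[OF level_subgroup] by blast
  moreover have "\<sigma> w \<otimes>\<^bsub>G\<^esub> (inv\<^bsub>G\<^esub> (\<sigma> w) \<otimes>\<^bsub>G\<^esub> \<sigma> x) = \<sigma> x"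
    using sigma_carrier[OF wc] sigma_carrier[OF xc] by (simp add: G.m_assoc[symmetric])
  ultimately show ?thesis by simp
qed

lemma sigma_level: "\<sigma> ` level j \<subseteq> level j"
proof (induction j)
  case 0
  show ?case unfolding level_0 using sigma_carrier by blast
next
  case (Suc i)
  show ?case
  proof (cases "i = 0")
    case True
    then have "level (Suc i) = carrier G" using level_1 by simp
    then show ?thesis using sigma_carrier by blast
  next
    case False
    then show ?thesis using sigma_level_Suc[OF _ Suc.IH] by auto
  qed
qed

lemma sigma_level_mem: "x \<in> level j \<Longrightarrow> \<sigma> x \<in> level j"
  using sigma_level by blast

end

section \<open>The induced involution of \<open>sl\<^sub>2(\<bbbF>\<^sub>p)\<close>\<close>

context sl21_involution
begin

text \<open>The involution \<open>s\<close> of \<open>sl\<^sub>2(\<bbbF>\<^sub>p)\<close>: the leading term of \<open>\<sigma> A\<close> at level one as a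
  function of that of \<open>A\<close>, well defined because \<open>\<sigma>\<close> preserves \<open>\<Gamma>\<^sub>2\<close>.\<close>

definition lie_sigma :: "m2 \<Rightarrow> m2" where
  "lie_sigma X = (SOME Y. \<forall>A. lead 1 A X \<longrightarrow> lead 1 (\<sigma> A) Y)"

lemma lead_eq_imp_sigma_level_Suc:
  assumes "1 \<le> j" "lead j A X" "lead j B X"
  shows "inv\<^bsub>G\<^esub> (\<sigma> A) \<otimes>\<^bsub>G\<^esub> \<sigma> B \<in> level (Suc j)"
proof -
  have c: "A \<in> carrier G" "B \<in> carrier G" using assms lead_carrier by blast+
  have "lead j (inv\<^bsub>G\<^esub> A \<otimes>\<^bsub>G\<^esub> B) (- X + X)"
    by (rule lead_mult[OF assms(1) lead_inv[OF assms(1,2)] assms(3)])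
  then have "inv\<^bsub>G\<^esub> A \<otimes>\<^bsub>G\<^esub> B \<in> level (Suc j)" by (rule lead_zero_level) simp
  then show ?thesis using sigma_level_mem c by fastforce
qed

lemma lead_sigma: "1 \<le> j \<Longrightarrow> lead j A X \<Longrightarrow> lead j (\<sigma> A) (lie_sigma X)"
proof (induction j arbitrary: A X rule: nat_induct_at_least)
  case base
  have "\<sigma> A \<in> level 1" using lead_carrier[OF base] level_1 by simp
  then obtain Y where Y: "lead 1 (\<sigma> A) Y" using lead_exists by blast
  have H: "lead 1 (\<sigma> B) Y" if "lead 1 B X" for B
    using lead_via_level[OF _ Y] lead_eq_imp_sigma_level_Suc[OF _ base that] that lead_carrier by simp
  have "\<forall>B. lead 1 B X \<longrightarrow> lead 1 (\<sigma> B) (lie_sigma X)"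
    unfolding lie_sigma_def by (rule someI[of _ Y]) (use H in blast)
  then show ?case using base by blast
next
  case (Suc j)
  txt \<open>Compare with the \<open>p\<close>-th power of a level-\<open>j\<close> element with the same leading term.\<close>
  obtain B where B: "lead j B X"
    using lead_surj[OF Suc.hyps lead_sl2_mod_p[OF _ Suc.prems]] by auto
  have Bp: "lead (Suc j) (B [^]\<^bsub>G\<^esub> p) X" by (rule lead_pow[OF Suc.hyps B])
  have "lead (Suc j) (\<sigma> (B [^]\<^bsub>G\<^esub> p)) (lie_sigma X)"
    using lead_pow[OF Suc.hyps Suc.IH[OF B]] lead_carrier[OF B] by (simp add: sigma.hom_nat_pow)
  then show ?case
    using lead_via_level[OF _ _ _ lead_eq_imp_sigma_level_Suc[OF _ Bp Suc.prems]] lead_carrier[OF Suc.prems]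
    by simp
qed

lemma lead_sigma_imp_mcong:
  "1 \<le> j \<Longrightarrow> lead j A X \<Longrightarrow> lead j (\<sigma> A) Y \<Longrightarrow> mcong (int p) (lie_sigma X) Y"
  using lead_sigma lead_unique by blast

lemma lie_sigma_sl2_mod_p: "sl2_mod_p X \<Longrightarrow> sl2_mod_p (lie_sigma X)"
  using exists_lead1 lead_sigma[of 1] lead_sl2_mod_p by blast

lemma lie_sigma_cong:
  assumes "sl2_mod_p X" "mcong (int p) X Y"
  shows "mcong (int p) (lie_sigma X) (lie_sigma Y)"
proof -
  obtain A where A: "lead 1 A X" using assms(1) exists_lead1 by blast
  show ?thesis
    using lead_sigma_imp_mcong[OF _ A lead_sigma[OF _ lead_cong[OF A assms(2)]]] by simp
qed

lemma lie_sigma_add: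
  assumes "sl2_mod_p X" "sl2_mod_p Y"
  shows "mcong (int p) (lie_sigma (X + Y)) (lie_sigma X + lie_sigma Y)"
proof -
  obtain A B where A: "lead 1 A X" and B: "lead 1 B Y" using assms exists_lead1 by blast
  have "lead 1 (\<sigma> A \<otimes>\<^bsub>G\<^esub> \<sigma> B) (lie_sigma X + lie_sigma Y)"
    by (rule lead_mult[OF _ lead_sigma[OF _ A] lead_sigma[OF _ B]]) simp_all
  then show ?thesis
    using lead_sigma_imp_mcong[OF _ lead_mult[OF _ A B]] lead_carrier A B by simp
qed

lemma lie_sigma_of_nat: "sl2_mod_p X \<Longrightarrow> mcong (int p) (lie_sigma (of_nat k * X)) (of_nat k * lie_sigma X)"
proof -
  assume "sl2_mod_p X"
  then obtain A where A: "lead 1 A X" using exists_lead1 by blast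
  have "lead 1 (\<sigma> A [^]\<^bsub>G\<^esub> k) (of_nat k * lie_sigma X)"
    by (rule lead_pow_nat[OF _ lead_sigma[OF _ A]]) simp_all
  then show ?thesis
    using lead_sigma_imp_mcong[OF _ lead_pow_nat[OF _ A]] lead_carrier[OF A]
    by (simp add: sigma.hom_nat_pow)
qed

lemma lie_sigma_zero: "mcong (int p) (lie_sigma 0) 0"
  using lead_sigma_imp_mcong[of 1 "\<one>\<^bsub>G\<^esub>" 0 0] lead_one by simp

lemma lie_sigma_neg: "sl2_mod_p X \<Longrightarrow> mcong (int p) (lie_sigma (- X)) (- lie_sigma X)"
proof -
  assume tx: "sl2_mod_p X"
  then have "mcong (int p) (lie_sigma (X + - X)) (lie_sigma X + lie_sigma (- X))"
    by (intro lie_sigma_add) (simp_all add: mtr_neg)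
  then have "mcong (int p) (lie_sigma X + lie_sigma (- X)) 0"
    using mcong_trans[OF mcong_sym lie_sigma_zero] by simp
  then have "mcong (int p) (- lie_sigma X + (lie_sigma X + lie_sigma (- X))) (- lie_sigma X + 0)"
    by (rule mcong_add[OF mcong_refl])
  then show ?thesis by (simp add: add.assoc[symmetric])
qed

lemma lie_sigma_smult: "sl2_mod_p X \<Longrightarrow> mcong (int p) (lie_sigma (of_int k * X)) (of_int k * lie_sigma X)"
proof (cases k rule: int_cases)
  case (nonneg n)
  then show "sl2_mod_p X \<Longrightarrow> ?thesis" using lie_sigma_of_nat by simp
next
  case (neg n)
  assume tx: "sl2_mod_p X"
  have "sl2_mod_p (of_nat (Suc n) * X)"
    using tx mtr_smult[of "int (Suc n)" X] by simp
  then have "mcong (int p) (lie_sigma (- (of_nat (Suc n) * X))) (- lie_sigma (of_nat (Suc n) * X))"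
    by (rule lie_sigma_neg)
  also have "mcong (int p) \<dots> (- (of_nat (Suc n) * lie_sigma X))"
    by (rule mcong_minus[OF lie_sigma_of_nat[OF tx]])
  finally show ?thesis by (simp add: neg del: of_nat_Suc)
qed

lemma lie_sigma_diff:
  assumes "sl2_mod_p X" "sl2_mod_p Y"
  shows "mcong (int p) (lie_sigma (X - Y)) (lie_sigma X - lie_sigma Y)"
proof -
  have "mcong (int p) (lie_sigma (X + - Y)) (lie_sigma X + lie_sigma (- Y))"
    using assms by (intro lie_sigma_add) (simp_all add: mtr_neg)
  also have "mcong (int p) \<dots> (lie_sigma X + - lie_sigma Y)"
    by (rule mcong_add[OF mcong_refl lie_sigma_neg[OF assms(2)]])
  finally show ?thesis by simp
qed

lemma lie_sigma_lincomb:
  assumes "sl2_mod_p X" "sl2_mod_p Y"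
  shows "mcong (int p) (lie_sigma (of_int a * X - of_int b * Y))
           (of_int a * lie_sigma X - of_int b * lie_sigma Y)"
proof -
  have "mcong (int p) (lie_sigma (of_int a * X - of_int b * Y))
      (lie_sigma (of_int a * X) - lie_sigma (of_int b * Y))"
    using assms by (intro lie_sigma_diff) (simp_all add: mtr_smult)
  also have "mcong (int p) \<dots> (of_int a * lie_sigma X - of_int b * lie_sigma Y)"
    by (rule mcong_diff[OF lie_sigma_smult[OF assms(1)] lie_sigma_smult[OF assms(2)]])
  finally show ?thesis .
qed

lemma lie_sigma_bracket:
  assumes "sl2_mod_p X" "sl2_mod_p Y"
  shows "mcong (int p) (lie_sigma (bracket X Y)) (bracket (lie_sigma X) (lie_sigma Y))"
proof -
  obtain A B where A: "lead 1 A X" and B: "lead 1 B Y" using assms exists_lead1 by blast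
  have "comm (\<sigma> A) (\<sigma> B) = \<sigma> (comm A B)"
    using A B lead_carrier by (simp add: comm_def)
  moreover have "lead 2 (comm (\<sigma> A) (\<sigma> B)) (bracket (lie_sigma X) (lie_sigma Y))"
    by (rule lead_comm[OF lead_sigma[OF _ A] lead_sigma[OF _ B]]) simp_all
  ultimately show ?thesis
    using lead_sigma_imp_mcong[OF _ lead_comm[OF A B]] by simp
qed

lemma lie_sigma_involutive: "sl2_mod_p X \<Longrightarrow> mcong (int p) (lie_sigma (lie_sigma X)) X"
proof -
  assume "sl2_mod_p X"
  then obtain A where A: "lead 1 A X" using exists_lead1 by blast
  have "lead 1 (\<sigma> (\<sigma> A)) (lie_sigma (lie_sigma X))"
    by (rule lead_sigma[OF _ lead_sigma[OF _ A]]) simp_all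
  then show ?thesis using invol lead_carrier[OF A] lead_unique[OF _ A] by simp
qed

text \<open>If \<open>s = id\<close>, the element \<open>y = g\<^sup>-\<^sup>1 \<sigma>(g)\<close>, which \<open>\<sigma>\<close> inverts, has leading terms
  \<open>X \<equiv> -X\<close> on every level and hence lies in every \<open>\<Gamma>\<^sub>n\<close>.\<close>

lemma lie_sigma_not_id: "\<exists>X. sl2_mod_p X \<and> \<not> mcong (int p) (lie_sigma X) X"
proof (rule ccontr)
  assume "\<not> ?thesis"
  then have lead_fix: "lead j (\<sigma> A) X" if "1 \<le> j" "lead j A X" for j A X
    using lead_cong[OF lead_sigma[OF that]] lead_sl2_mod_p[OF that] by blast
  obtain g where g: "g \<in> carrier G" "\<sigma> g \<noteq> g" using nontriv by blast
  define y where "y = inv\<^bsub>G\<^esub> g \<otimes>\<^bsub>G\<^esub> \<sigma> g"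
  have yc: "y \<in> carrier G" using g(1) by (simp add: y_def)
  have sy: "\<sigma> y = inv\<^bsub>G\<^esub> y" unfolding y_def by (rule sigma_inv_mult_sigma[OF g(1)])
  have "y \<in> level (Suc n)" for n
  proof (induction n)
    case 0
    then show ?case using yc level_1 by simp
  next
    case (Suc k)
    then obtain X where X: "lead (Suc k) y X" using lead_exists by blast
    have "lead (Suc k) (inv\<^bsub>G\<^esub> y) X" using lead_fix[OF _ X] sy by simp
    then have "mcong (int p) X (- X)" by (rule lead_unique[OF _ lead_inv[OF _ X]]) simp
    then show ?case by (rule lead_zero_level[OF X mcong_eq_neg_imp_zero])
  qed
  then have "y \<in> level n" for n using yc level_0 by (cases n) auto
  then have "y = \<one>\<^bsub>G\<^esub>" by (rule level_Inter_eq_one[OF yc])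
  moreover have "\<sigma> g = g \<otimes>\<^bsub>G\<^esub> y" using g(1) by (simp add: y_def G.m_assoc[symmetric])
  ultimately show False using g by simp
qed

lemma lie_sigma_not_neg_id: "\<exists>X. sl2_mod_p X \<and> \<not> mcong (int p) (lie_sigma X) (- X)"
proof (rule ccontr)
  assume "\<not> ?thesis"
  then have neg: "\<And>X. sl2_mod_p X \<Longrightarrow> mcong (int p) (lie_sigma X) (- X)" by blast
  define e where "e = M2 0 1 0 0"
  define f where "f = M2 0 0 1 0"
  have te: "sl2_mod_p e" and tf: "sl2_mod_p f" by (simp_all add: e_def f_def mtr_def)
  have "mcong (int p) (lie_sigma (bracket e f)) (bracket (lie_sigma e) (lie_sigma f))"
    by (rule lie_sigma_bracket[OF te tf])
  also have "mcong (int p) \<dots> (bracket (- e) (- f))"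
    by (rule mcong_bracket[OF neg[OF te] neg[OF tf]])
  also have "bracket (- e) (- f) = bracket e f" by (simp add: bracket_def)
  finally have "mcong (int p) (bracket e f) (lie_sigma (bracket e f))" by (rule mcong_sym)
  also have "mcong (int p) \<dots> (- bracket e f)" by (rule neg) (simp add: mtr_bracket)
  finally have "mcong (int p) (bracket e f) (- bracket e f)" .
  then have "mcong (int p) (bracket e f) 0" by (rule mcong_eq_neg_imp_zero)
  then have "int p dvd 1" by (simp add: bracket_def e_def f_def mcong_entries)
  then show False using p_ge3 by (simp add: zdvd_imp_le)
qed

lemma exists_lie_sigma_anti_fixed:
  "\<exists>Z. sl2_mod_p Z \<and> \<not> mcong (int p) Z 0 \<and> mcong (int p) (lie_sigma Z) (- Z)"
proof -
  obtain v where v: "sl2_mod_p v" "\<not> mcong (int p) (lie_sigma v) v" using lie_sigma_not_id by blast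
  define Z where "Z = v - lie_sigma v"
  have "sl2_mod_p Z" unfolding Z_def using v(1) lie_sigma_sl2_mod_p[OF v(1)] by (simp add: mtr_diff)
  moreover have "\<not> mcong (int p) Z 0"
  proof
    assume "mcong (int p) Z 0"
    then have "mcong (int p) (Z + lie_sigma v) (0 + lie_sigma v)" by (rule mcong_add[OF _ mcong_refl])
    then show False using v(2) mcong_sym by (simp add: Z_def)
  qed
  moreover have "mcong (int p) (lie_sigma Z) (- Z)"
  proof -
    have "mcong (int p) (lie_sigma Z) (lie_sigma v - lie_sigma (lie_sigma v))"
      unfolding Z_def by (rule lie_sigma_diff[OF v(1) lie_sigma_sl2_mod_p[OF v(1)]])
    also have "mcong (int p) \<dots> (lie_sigma v - v)"
      by (rule mcong_diff[OF mcong_refl lie_sigma_involutive[OF v(1)]])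
    finally show ?thesis by (simp add: Z_def)
  qed
  ultimately show ?thesis by blast
qed

text \<open>Apply \<open>s\<close> to the identity \<open>[Z, [X, Z]] = 2 tr(ZX) Z - 2 tr(Z\<^sup>2) X\<close>: the left side and
  the \<open>X\<close>-term are fixed while \<open>Z\<close> changes sign.\<close>

lemma lie_sigma_fixed_orthogonal:
  assumes tZ: "sl2_mod_p Z" and nzZ: "\<not> mcong (int p) Z 0" and sZ: "mcong (int p) (lie_sigma Z) (- Z)"
    and tX: "sl2_mod_p X" and fX: "mcong (int p) (lie_sigma X) X"
  shows "int p dvd mtr (Z * X)"
proof -
  define L where "L = bracket Z (bracket X Z)"
  define R where "R = of_int (2 * mtr (Z * X)) * Z - of_int (2 * mtr (Z * Z)) * X"
  define R' where "R' = of_int (2 * mtr (Z * X)) * (- Z) - of_int (2 * mtr (Z * Z)) * X"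
  have tL: "sl2_mod_p L" by (simp add: L_def mtr_bracket)
  have LR: "mcong (int p) L R" unfolding L_def R_def by (rule bracket_mod_p_expand[OF tZ tX tZ])
  have "mcong (int p) (lie_sigma L) (bracket (lie_sigma Z) (lie_sigma (bracket X Z)))"
    unfolding L_def by (rule lie_sigma_bracket[OF tZ]) (simp add: mtr_bracket)
  also have "mcong (int p) \<dots> (bracket (- Z) (bracket X (- Z)))"
    by (rule mcong_bracket[OF sZ mcong_trans[OF lie_sigma_bracket[OF tX tZ] mcong_bracket[OF fX sZ]]])
  also have "bracket (- Z) (bracket X (- Z)) = L" by (simp add: L_def bracket_def algebra_simps)
  finally have sL: "mcong (int p) (lie_sigma L) L" .
  have "mcong (int p) (lie_sigma R)
      (of_int (2 * mtr (Z * X)) * lie_sigma Z - of_int (2 * mtr (Z * Z)) * lie_sigma X)"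
    unfolding R_def by (rule lie_sigma_lincomb[OF tZ tX])
  also have "mcong (int p) \<dots> R'" unfolding R'_def
    by (rule mcong_diff[OF mcong_mult[OF mcong_refl sZ] mcong_mult[OF mcong_refl fX]])
  finally have sR: "mcong (int p) (lie_sigma R) R'" .
  have "mcong (int p) R L" by (rule mcong_sym[OF LR])
  also have "mcong (int p) L (lie_sigma L)" by (rule mcong_sym[OF sL])
  also have "mcong (int p) (lie_sigma L) (lie_sigma R)" by (rule lie_sigma_cong[OF tL LR])
  also note sR
  finally have "mcong (int p) (R - R') (R' - R')" by (rule mcong_diff[OF _ mcong_refl])
  moreover have "R - R' = of_int (2 * (2 * mtr (Z * X))) * Z"
    unfolding R_def R'_def by (cases Z; cases X) (simp add: of_int_m2 algebra_simps)
  ultimately have "mcong (int p) (of_int (2 * (2 * mtr (Z * X))) * Z) 0" by simp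
  then have "int p dvd 2 * (2 * mtr (Z * X))" by (rule mcong_smult_zero_imp_dvd[OF _ nzZ])
  then show ?thesis by (simp only: p_dvd_2_times_iff)
qed

text \<open>The fixed space of \<open>s\<close> is a line: fixed vectors bracket to fixed vectors, which
  are orthogonal to an anti-fixed \<open>Z\<close> and so commute with it by the same identity; hence they
  are multiples of \<open>Z\<close>, and being both fixed and anti-fixed they vanish.\<close>

lemma lie_sigma_fixed_line:
  assumes t0: "sl2_mod_p X0" and nz0: "\<not> mcong (int p) X0 0" and f0: "mcong (int p) (lie_sigma X0) X0"
    and tW: "sl2_mod_p W" and fW: "mcong (int p) (lie_sigma W) W"
  shows "\<exists>l. mcong (int p) W (of_int l * X0)"
proof -
  obtain Z where tZ: "sl2_mod_p Z" and nzZ: "\<not> mcong (int p) Z 0"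
    and sZ: "mcong (int p) (lie_sigma Z) (- Z)"
    using exists_lie_sigma_anti_fixed by blast
  note orth = lie_sigma_fixed_orthogonal[OF tZ nzZ sZ]
  define U where "U = bracket X0 W"
  have tU: "sl2_mod_p U" by (simp add: U_def mtr_bracket)
  have sU: "mcong (int p) (lie_sigma U) U"
    unfolding U_def using lie_sigma_bracket[OF t0 tW] mcong_bracket[OF f0 fW] by (rule mcong_trans)
  have "mcong (int p) (bracket Z U)
      (of_int (2 * mtr (Z * X0)) * W - of_int (2 * mtr (Z * W)) * X0)"
    unfolding U_def by (rule bracket_mod_p_expand[OF tZ t0 tW])
  also have "mcong (int p) \<dots> (0 - 0)"
    using orth[OF t0 f0] orth[OF tW fW] by (intro mcong_diff mcong_smult_zero) simp_all
  finally have "mcong (int p) (bracket Z U) 0" by simp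
  then obtain mu where mu: "mcong (int p) U (of_int mu * Z)"
    using bracket_zero_imp_proportional[OF tZ tU nzZ] by blast
  have "mcong (int p) U (lie_sigma U)" by (rule mcong_sym[OF sU])
  also have "mcong (int p) \<dots> (lie_sigma (of_int mu * Z))" by (rule lie_sigma_cong[OF tU mu])
  also have "mcong (int p) \<dots> (of_int mu * lie_sigma Z)" by (rule lie_sigma_smult[OF tZ])
  also have "mcong (int p) \<dots> (- (of_int mu * Z))" using mcong_mult[OF mcong_refl sZ] by simp
  also have "mcong (int p) \<dots> (- U)" by (rule mcong_minus[OF mcong_sym[OF mu]])
  finally have "mcong (int p) (bracket X0 W) 0" unfolding U_def by (rule mcong_eq_neg_imp_zero)
  then show ?thesis using bracket_zero_imp_proportional[OF t0 tW nz0] by blast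
qed

end

section \<open>Lifting fixed points\<close>

context odd_prime
begin

definition half_mod_p :: int where
  "half_mod_p = (int p + 1) div 2"

lemma two_half_mod_p: "2 * half_mod_p - 1 = int p"
proof -
  have "even (int p + 1)" using odd_p by simp
  then have "2 * ((int p + 1) div 2) = int p + 1" by (rule dvd_mult_div_cancel)
  then show ?thesis unfolding half_mod_p_def by simp
qed

end

context sl21_involution
begin

definition defect :: "mat2 \<Rightarrow> mat2" where
  "defect y = inv\<^bsub>G\<^esub> y \<otimes>\<^bsub>G\<^esub> \<sigma> y"

lemma sigma_defect: "y \<in> carrier G \<Longrightarrow> \<sigma> (defect y) = inv\<^bsub>G\<^esub> (defect y)"
  unfolding defect_def by (rule sigma_inv_mult_sigma)

lemma defect_mult:
  "y \<in> carrier G \<Longrightarrow> w \<in> carrier G \<Longrightarrow>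
     defect (y \<otimes>\<^bsub>G\<^esub> w) = inv\<^bsub>G\<^esub> w \<otimes>\<^bsub>G\<^esub> defect y \<otimes>\<^bsub>G\<^esub> \<sigma> w"
  by (simp add: defect_def G.inv_mult_group G.m_assoc)

text \<open>A defect with leading term \<open>Z\<close> at level \<open>k\<close> has \<open>s Z \<equiv> -Z\<close>; multiplying by an element
  with leading term \<open>Z/2\<close> kills it, since \<open>-Z/2 + Z - Z/2 = 0\<close>.\<close>

lemma exists_defect_correction:
  assumes k: "1 \<le> k" and y: "y \<in> carrier G" and Z: "lead k (defect y) Z"
  shows "\<exists>w. lead k w (of_int half_mod_p * Z) \<and> defect (y \<otimes>\<^bsub>G\<^esub> w) \<in> level (Suc k)"
proof -
  have tZ: "sl2_mod_p Z" by (rule lead_sl2_mod_p[OF k Z])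
  have "lead k (inv\<^bsub>G\<^esub> (defect y)) (lie_sigma Z)"
    using lead_sigma[OF k Z] sigma_defect[OF y] by simp
  then have sZ: "mcong (int p) (lie_sigma Z) (- Z)" by (rule lead_unique[OF _ lead_inv[OF k Z]])
  define W where "W = of_int half_mod_p * Z"
  have tW: "sl2_mod_p W" unfolding W_def using tZ by (simp add: mtr_smult)
  obtain w where w: "lead k w W" using lead_surj[OF k tW] by blast
  have wc: "w \<in> carrier G" by (rule lead_carrier[OF w])
  have sW: "mcong (int p) (lie_sigma W) (- W)"
    unfolding W_def using mcong_trans[OF lie_sigma_smult[OF tZ] mcong_mult[OF mcong_refl sZ]] by simp
  have "lead k (inv\<^bsub>G\<^esub> w \<otimes>\<^bsub>G\<^esub> defect y \<otimes>\<^bsub>G\<^esub> \<sigma> w) (- W + Z + lie_sigma W)"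
    by (rule lead_mult[OF k lead_mult[OF k lead_inv[OF k w] Z] lead_sigma[OF k w]])
  moreover have "mcong (int p) (- W + Z + lie_sigma W) 0"
  proof -
    have "mcong (int p) (- W + Z + lie_sigma W) (- W + Z + - W)"
      by (rule mcong_add[OF mcong_refl sW])
    also have "- W + Z + - W = - (of_int (2 * half_mod_p - 1) * Z)"
      unfolding W_def by (cases Z) (simp add: of_int_m2 algebra_simps)
    also have "mcong (int p) \<dots> 0"
      using mcong_minus[OF mcong_smult_zero[of "int p" "int p"]] by (simp add: two_half_mod_p)
    finally show ?thesis .
  qed
  ultimately have "defect (y \<otimes>\<^bsub>G\<^esub> w) \<in> level (Suc k)"
    using defect_mult[OF y wc] lead_zero_level by simp
  then show ?thesis using w unfolding W_def by blast
qed

definition refine :: "nat \<Rightarrow> mat2 \<Rightarrow> mat2" where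
  "refine k y = y \<otimes>\<^bsub>G\<^esub> (SOME w. w \<in> level k \<and> defect (y \<otimes>\<^bsub>G\<^esub> w) \<in> level (Suc k))"

lemma refine_spec:
  assumes k: "1 \<le> k" and y: "y \<in> carrier G" and d: "defect y \<in> level k"
  shows "refine k y \<in> carrier G" "defect (refine k y) \<in> level (Suc k)"
    "rep k (refine k y) = rep k y"
proof -
  obtain Z where Z: "lead k (defect y) Z" using lead_exists[OF d] by blast
  have "\<exists>w. w \<in> level k \<and> defect (y \<otimes>\<^bsub>G\<^esub> w) \<in> level (Suc k)"
    using exists_defect_correction[OF k y Z] lead_level by blast
  from someI_ex[OF this] obtain w where w: "w \<in> level k" "defect (y \<otimes>\<^bsub>G\<^esub> w) \<in> level (Suc k)"
    and r: "refine k y = y \<otimes>\<^bsub>G\<^esub> w"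
    unfolding refine_def by blast
  have wc: "w \<in> carrier G" using w(1) level_carrier by blast
  show "refine k y \<in> carrier G" "defect (refine k y) \<in> level (Suc k)"
    using r w(2) y wc by simp_all
  have "inv\<^bsub>G\<^esub> y \<otimes>\<^bsub>G\<^esub> refine k y \<in> level k"
    using r w(1) y wc by (simp add: G.m_assoc[symmetric])
  then show "rep k (refine k y) = rep k y"
    using level_inv_mult_iff[OF y] r y wc by simp
qed

primrec refine_seq :: "nat \<Rightarrow> mat2 \<Rightarrow> nat \<Rightarrow> mat2" where
  "refine_seq k y 0 = y"
| "refine_seq k y (Suc n) = refine (k + n) (refine_seq k y n)"

context
  fixes k y
  assumes k: "1 \<le> k" and y: "y \<in> carrier G" and d: "defect y \<in> level k"
begin

lemma refine_seq_carrier_defect: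
  "refine_seq k y n \<in> carrier G \<and> defect (refine_seq k y n) \<in> level (k + n)"
proof (induction n)
  case (Suc n)
  then show ?case using refine_spec(1,2)[of "k + n"] k by simp
qed (use y d in simp)

lemma refine_seq_carrier: "refine_seq k y n \<in> carrier G"
  using refine_seq_carrier_defect by blast

lemma rep_refine_seq_stable:
  "n \<le> m \<Longrightarrow> rep (k + n) (refine_seq k y m) = rep (k + n) (refine_seq k y n)"
proof (induction m rule: dec_induct)
  case (step m)
  have "rep (k + m) (refine_seq k y (Suc m)) = rep (k + m) (refine_seq k y m)"
    using refine_spec(3)[of "k + m"] refine_seq_carrier_defect k by simp
  then have "rep (k + n) (refine_seq k y (Suc m)) = rep (k + n) (refine_seq k y m)"
    by (rule rep_eq_mono[OF refine_seq_carrier refine_seq_carrier, rotated]) (use step in simp)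
  then show ?case using step by simp
qed simp

lemma rep_refine_seq:
  assumes "n \<le> m"
  shows "rep n (refine_seq k y m) = rep n (refine_seq k y n)"
proof (rule rep_eq_mono[OF refine_seq_carrier refine_seq_carrier])
  show "rep (k + n) (refine_seq k y m) = rep (k + n) (refine_seq k y n)"
    by (rule rep_refine_seq_stable[OF assms])
qed simp

lemma refine_seq_limit: "\<exists>t\<in>carrier G. \<forall>n m. n \<le> m \<longrightarrow> rep n t = rep n (refine_seq k y m)"
proof -
  define F where "F n = rep n (refine_seq k y n)" for n
  have "sl21_seq F"
    unfolding sl21_seq_def
  proof (intro conjI allI)
    fix n
    have "mcong (q n) (rep (Suc n) (refine_seq k y (Suc n))) (rep n (refine_seq k y (Suc n)))"
      by (rule rep_mono[OF refine_seq_carrier]) simp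
    then show "mcong (q n) (F (Suc n)) (F n)"
      using rep_refine_seq[of n "Suc n"] by (simp add: F_def)
    show "q n dvd mdet (F n) - 1"
      unfolding F_def by (rule mdet_rep[OF refine_seq_carrier])
  next
    show "mcong (int p) (F 1) 1"
      using carrier_repD(1)[OF refine_seq_carrier[of 1]] by (simp add: sl21_seq_def F_def)
  qed
  moreover have "rep n (ofseq p F) = rep n (refine_seq k y m)" if "n \<le> m" for n m
  proof -
    have "rep n (ofseq p F) = F n"
      unfolding rep_ofseq F_def by (rule carrier_repD(3)[OF refine_seq_carrier])
    then show ?thesis using rep_refine_seq[OF that] by (simp add: F_def)
  qed
  ultimately show ?thesis using ofseq_carrier by blast
qed

text \<open>The limit of the refinements is \<open>\<sigma>\<close>-fixed: modulo \<open>p\<^sup>n\<close>, both it and its image under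
  \<open>\<sigma>\<close> agree with a late refinement, whose defect lies in \<open>\<Gamma>\<^sub>n\<close>.\<close>

lemma exists_fixed_lift: "\<exists>t\<in>carrier G. \<sigma> t = t \<and> rep k t = rep k y"
proof -
  obtain t where tc: "t \<in> carrier G"
    and rep_t: "\<And>n m. n \<le> m \<Longrightarrow> rep n t = rep n (refine_seq k y m)"
    using refine_seq_limit by blast
  have "rep n (\<sigma> t) = rep n t" for n
  proof -
    obtain m0 where m0: "\<forall>g\<in>carrier G. \<forall>h\<in>carrier G. rep m0 g = rep m0 h \<longrightarrow>
        rep n (\<sigma> g) = rep n (\<sigma> h)"
      using sigma_continuous by blast
    define M where "M = max m0 n"
    define z where "z = refine_seq k y M"
    have zc: "z \<in> carrier G" unfolding z_def by (rule refine_seq_carrier)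
    have "rep m0 t = rep m0 z" unfolding z_def by (rule rep_t) (simp add: M_def)
    then have "rep n (\<sigma> t) = rep n (\<sigma> z)" using m0 tc zc by blast
    also have "\<dots> = rep n z"
    proof -
      have "defect z \<in> level (k + M)" unfolding z_def using refine_seq_carrier_defect by blast
      moreover have "n \<le> k + M" by (simp add: M_def)
      ultimately have "defect z \<in> level n" using level_mono by blast
      then show ?thesis
        unfolding defect_def using level_inv_mult_iff[OF zc sigma_carrier[OF zc]] by simp
    qed
    also have "\<dots> = rep n t" unfolding z_def by (rule rep_t[symmetric]) (simp add: M_def)
    finally show ?thesis .
  qed
  then have "\<sigma> t = t" by (rule eq_by_rep)
  moreover have "rep k t = rep k y"
    using rep_t[of k k] rep_refine_seq_stable[of 0 k] by simp
  ultimately show ?thesis using tc by blast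
qed

end

text \<open>Correct an element with leading term \<open>X\<close>, \<open>s X \<noteq> -X\<close>, once at level one, which
  replaces its leading term by \<open>(X + s X)/2\<close>, and then lift.\<close>

lemma exists_fixed_point_lead:
  obtains t0 X0 where "t0 \<in> carrier G" "\<sigma> t0 = t0" "lead 1 t0 X0" "sl2_mod_p X0"
    "\<not> mcong (int p) X0 0" "mcong (int p) (lie_sigma X0) X0"
proof -
  obtain X where X: "sl2_mod_p X" "\<not> mcong (int p) (lie_sigma X) (- X)"
    using lie_sigma_not_neg_id by blast
  obtain x where x: "lead 1 x X" using exists_lead1[OF X(1)] by blast
  have xc: "x \<in> carrier G" by (rule lead_carrier[OF x])
  have "lead 1 (defect x) (- X + lie_sigma X)"
    unfolding defect_def by (rule lead_mult[OF _ lead_inv[OF _ x] lead_sigma[OF _ x]]) simp_all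
  then obtain w where w: "lead 1 w (of_int half_mod_p * (- X + lie_sigma X))"
      "defect (x \<otimes>\<^bsub>G\<^esub> w) \<in> level (Suc 1)"
    using exists_defect_correction[OF _ xc] by blast
  define X0 where "X0 = X + of_int half_mod_p * (- X + lie_sigma X)"
  have y0: "lead 1 (x \<otimes>\<^bsub>G\<^esub> w) X0" unfolding X0_def by (rule lead_mult[OF _ x w(1)]) simp
  have "\<exists>t\<in>carrier G. \<sigma> t = t \<and> rep (Suc 1) t = rep (Suc 1) (x \<otimes>\<^bsub>G\<^esub> w)"
    by (rule exists_fixed_lift) (use lead_carrier[OF y0] w(2) in simp_all)
  then obtain t where t: "t \<in> carrier G" "\<sigma> t = t" "rep (Suc 1) t = rep (Suc 1) (x \<otimes>\<^bsub>G\<^esub> w)"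
    by blast
  have lt: "lead 1 t X0"
    using y0 t(1,3) by (simp add: lead_def)
  have "mcong (int p) (lie_sigma X0) X0"
    using lead_unique[OF lead_sigma[OF _ lt]] t(2) lt by simp
  moreover have "\<not> mcong (int p) X0 0"
  proof
    assume "mcong (int p) X0 0"
    then have "mcong (int p) (of_int 2 * X0) (of_int 2 * 0)" by (rule mcong_mult[OF mcong_refl])
    moreover have "of_int 2 * X0 = X + lie_sigma X + of_int (int p) * (lie_sigma X - X)"
      unfolding X0_def two_half_mod_p[symmetric]
      by (cases X; cases "lie_sigma X") (simp add: of_int_m2 algebra_simps)
    ultimately have "mcong (int p) (X + lie_sigma X) 0"
      using mcong_trans[OF mcong_sym[OF mcong_add_smult]] by simp
    then have "mcong (int p) (- X + (X + lie_sigma X)) (- X + 0)" by (rule mcong_add[OF mcong_refl])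
    then show False using X(2) by simp
  qed
  ultimately show ?thesis using that t(1,2) lt lead_sl2_mod_p[OF _ lt] by simp
qed

end

section \<open>Subgroups cut out by a line of leading terms\<close>

context odd_prime
begin

lemma closed_subgroup_gen_least:
  "subgroup H G \<Longrightarrow> Sl21_closed p H \<Longrightarrow> S \<subseteq> H \<Longrightarrow> closed_subgroup_gen p S \<subseteq> H"
  unfolding closed_subgroup_gen_def by blast

lemma subset_closed_subgroup_gen: "S \<subseteq> closed_subgroup_gen p S"
  unfolding closed_subgroup_gen_def by blast

lemma one_closed_subgroup_gen: "\<one>\<^bsub>G\<^esub> \<in> closed_subgroup_gen p S"
  unfolding closed_subgroup_gen_def using subgroup.one_closed by blast

lemma closed_normal_closure_least:
  "normal N G \<Longrightarrow> Sl21_closed p N \<Longrightarrow> S \<subseteq> N \<Longrightarrow> closed_normal_closure p S \<subseteq> N"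
  unfolding closed_normal_closure_def by blast

lemma subset_closed_normal_closure: "S \<subseteq> closed_normal_closure p S"
  unfolding closed_normal_closure_def by blast

definition line_subgroup :: "nat \<Rightarrow> m2 \<Rightarrow> mat2 set" where
  "line_subgroup j X0 = {A \<in> carrier G. \<exists>l. lead j A (of_int l * X0)}"

lemma line_subgroup_subgroup: "1 \<le> j \<Longrightarrow> subgroup (line_subgroup j X0) G"
proof (rule G.subgroupI)
  assume j: "1 \<le> j"
  show "line_subgroup j X0 \<subseteq> carrier G" unfolding line_subgroup_def by blast
  have "lead j \<one>\<^bsub>G\<^esub> (of_int 0 * X0)" using lead_one by simp
  then show "line_subgroup j X0 \<noteq> {}" unfolding line_subgroup_def using one_carrier by blast
  fix A B assume "A \<in> line_subgroup j X0" "B \<in> line_subgroup j X0"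
  then obtain l l' where c: "A \<in> carrier G" "B \<in> carrier G"
    and l: "lead j A (of_int l * X0)" and l': "lead j B (of_int l' * X0)"
    unfolding line_subgroup_def by blast
  have "lead j (inv\<^bsub>G\<^esub> A) (of_int (- l) * X0)" using lead_inv[OF j l] by simp
  then show "inv\<^bsub>G\<^esub> A \<in> line_subgroup j X0"
    unfolding line_subgroup_def using c G.inv_closed by blast
  have "lead j (A \<otimes>\<^bsub>G\<^esub> B) (of_int (l + l') * X0)"
    using lead_mult[OF j l l'] by (simp add: distrib_right)
  then show "A \<otimes>\<^bsub>G\<^esub> B \<in> line_subgroup j X0"
    unfolding line_subgroup_def using c G.m_closed by blast
qed

lemma line_subgroup_closed: "1 \<le> j \<Longrightarrow> Sl21_closed p (line_subgroup j X0)"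
  unfolding Sl21_closed_def
proof (intro conjI subsetI)
  assume j: "1 \<le> j"
  fix g assume "g \<in> Sl21_closure p (line_subgroup j X0)"
  then obtain s l where gc: "g \<in> carrier G" and sc: "s \<in> carrier G"
    and sl: "lead j s (of_int l * X0)" and r: "rep (Suc j) s = rep (Suc j) g"
    unfolding Sl21_closure_def line_subgroup_def red_eq_iff_rep_eq by blast
  have "lead j g (of_int l * X0)"
    by (rule lead_via_level[OF j sl gc iffD2[OF level_inv_mult_iff[OF sc gc] r]])
  then show "g \<in> line_subgroup j X0" unfolding line_subgroup_def using gc by blast
qed (unfold line_subgroup_def, blast)

text \<open>Conjugation does not change leading terms at level one.\<close>

lemma line_subgroup_normal: "normal (line_subgroup 1 X0) G"
proof -
  have "x \<otimes>\<^bsub>G\<^esub> h \<otimes>\<^bsub>G\<^esub> inv\<^bsub>G\<^esub> x \<in> line_subgroup 1 X0"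
    if x: "x \<in> carrier G" and h: "h \<in> line_subgroup 1 X0" for x h
  proof -
    obtain l where hc: "h \<in> carrier G" and l: "lead 1 h (of_int l * X0)"
      using h unfolding line_subgroup_def by blast
    obtain Y where Y: "lead 1 x Y" using lead_exists x level_1 by blast
    have "lead 1 (x \<otimes>\<^bsub>G\<^esub> h \<otimes>\<^bsub>G\<^esub> inv\<^bsub>G\<^esub> x) (Y + of_int l * X0 + - Y)"
      by (rule lead_mult[OF _ lead_mult[OF _ Y l] lead_inv[OF _ Y]]) simp_all
    then have "lead 1 (x \<otimes>\<^bsub>G\<^esub> h \<otimes>\<^bsub>G\<^esub> inv\<^bsub>G\<^esub> x) (of_int l * X0)"
      by (simp add: algebra_simps)
    then show ?thesis unfolding line_subgroup_def using lead_carrier by blast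
  qed
  then show ?thesis
    using line_subgroup_subgroup[of 1] G.normal_inv_iff by blast
qed

text \<open>\<open>p\<close>-th powers move leading terms up a level, and commutators of elements of a line
  subgroup have leading term a bracket of two multiples of \<open>X\<^sub>0\<close>, which vanishes.\<close>

lemma frattini_subset_line_subgroup:
  assumes "H \<subseteq> line_subgroup 1 X0"
  shows "frattini p H \<subseteq> line_subgroup 2 X0"
  unfolding frattini_def
proof (intro closed_subgroup_gen_least line_subgroup_subgroup line_subgroup_closed Un_least subsetI)
  fix z assume "z \<in> {h [^]\<^bsub>G\<^esub> p | h. h \<in> H}"
  then obtain h where z: "z = h [^]\<^bsub>G\<^esub> p" and "h \<in> H" by blast
  then obtain l where l: "lead 1 h (of_int l * X0)"
    using assms unfolding line_subgroup_def by blast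
  have "lead 2 z (of_int l * X0)" using lead_pow[of 1 h, OF _ l] z by (simp add: numeral_2_eq_2)
  then show "z \<in> line_subgroup 2 X0"
    unfolding line_subgroup_def using lead_carrier by blast
next
  fix z assume "z \<in> {inv\<^bsub>G\<^esub> h \<otimes>\<^bsub>G\<^esub> inv\<^bsub>G\<^esub> k \<otimes>\<^bsub>G\<^esub> h \<otimes>\<^bsub>G\<^esub> k | h k. h \<in> H \<and> k \<in> H}"
  then obtain h k where z: "z = comm h k" and "h \<in> H" "k \<in> H" unfolding comm_def by blast
  then obtain l l' where l: "lead 1 h (of_int l * X0)" and l': "lead 1 k (of_int l' * X0)"
    using assms unfolding line_subgroup_def by blast
  have "bracket (of_int l * X0) (of_int l' * X0) = of_int 0 * X0"
    by (cases X0) (simp add: bracket_def of_int_m2 algebra_simps m2_zero_one)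
  then have "lead 2 z (of_int 0 * X0)"
    using lead_comm[OF l l'] z by simp
  then show "z \<in> line_subgroup 2 X0"
    unfolding line_subgroup_def using lead_carrier by blast
qed simp_all

text \<open>If \<open>[Y, X\<^sub>0]\<close> is off the line of \<open>X\<^sub>0\<close>, conjugation by an element with leading term \<open>Y\<close>
  moves \<open>t\<^sub>0\<close> out of its coset: \<open>(g t\<^sub>0 g\<^sup>-\<^sup>1) t\<^sub>0\<^sup>-\<^sup>1\<close> is the commutator of \<open>g\<^sup>-\<^sup>1\<close> and \<open>t\<^sub>0\<^sup>-\<^sup>1\<close>.\<close>

lemma conj_r_coset_ne:
  assumes Phi: "Phi \<subseteq> line_subgroup 2 X0" "\<one>\<^bsub>G\<^esub> \<in> Phi"
    and g: "lead 1 g Y" and t0: "lead 1 t0 X0"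
    and off: "\<And>l. \<not> mcong (int p) (bracket Y X0) (of_int l * X0)"
  shows "r_coset G Phi (g \<otimes>\<^bsub>G\<^esub> t0 \<otimes>\<^bsub>G\<^esub> inv\<^bsub>G\<^esub> g) \<noteq> r_coset G Phi t0"
proof
  define c where "c = g \<otimes>\<^bsub>G\<^esub> t0 \<otimes>\<^bsub>G\<^esub> inv\<^bsub>G\<^esub> g"
  have gc: "g \<in> carrier G" and tc: "t0 \<in> carrier G" using g t0 lead_carrier by blast+
  assume "r_coset G Phi c = r_coset G Phi t0"
  moreover have "c \<in> r_coset G Phi c"
    using Phi(2) gc tc unfolding r_coset_def c_def by force
  ultimately obtain f where f: "f \<in> Phi" and cf: "c = f \<otimes>\<^bsub>G\<^esub> t0" unfolding r_coset_def by auto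
  obtain l where fc: "f \<in> carrier G" and fl: "lead 2 f (of_int l * X0)"
    using f Phi(1) unfolding line_subgroup_def by blast
  have "f = c \<otimes>\<^bsub>G\<^esub> inv\<^bsub>G\<^esub> t0" unfolding cf using fc tc by (simp add: G.m_assoc)
  also have "\<dots> = comm (inv\<^bsub>G\<^esub> g) (inv\<^bsub>G\<^esub> t0)" unfolding c_def comm_def using gc tc by simp
  finally have "lead 2 f (bracket (- Y) (- X0))"
    using lead_comm[OF lead_inv[OF _ g] lead_inv[OF _ t0]] by simp
  then have "mcong (int p) (bracket Y X0) (of_int l * X0)"
    using lead_unique[OF _ fl] by (simp add: bracket_def)
  with off show False by blast
qed

end

context sl21_involution
begin

lemma fixed_subset_line_subgroup:
  assumes "sl2_mod_p X0" "\<not> mcong (int p) X0 0" "mcong (int p) (lie_sigma X0) X0"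
  shows "{g \<in> carrier G. \<sigma> g = g} \<subseteq> line_subgroup 1 X0"
proof
  fix g assume "g \<in> {g \<in> carrier G. \<sigma> g = g}"
  then have gc: "g \<in> carrier G" and gf: "\<sigma> g = g" by auto
  obtain W where W: "lead 1 g W" using lead_exists gc level_1 by blast
  have "mcong (int p) (lie_sigma W) W"
    using lead_sigma_imp_mcong[OF _ W] W gf by simp
  then obtain l where "mcong (int p) W (of_int l * X0)"
    using lie_sigma_fixed_line[OF assms lead_sl2_mod_p[OF _ W]] by auto
  then show "g \<in> line_subgroup 1 X0"
    using lead_cong[OF W] gc unfolding line_subgroup_def by blast
qed

lemma Gamma_sigma_subset_line_subgroup:
  assumes "sl2_mod_p X0" "\<not> mcong (int p) X0 0" "mcong (int p) (lie_sigma X0) X0"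
  shows "Gamma_sigma p \<sigma> \<subseteq> line_subgroup 1 X0"
  unfolding Gamma_sigma_def Gamma_sigma_circ_def
  by (intro closed_normal_closure_least closed_subgroup_gen_least line_subgroup_normal
      line_subgroup_subgroup line_subgroup_closed fixed_subset_line_subgroup[OF assms]) simp_all

lemma fixed_in_Gamma_sigma: "t \<in> carrier G \<Longrightarrow> \<sigma> t = t \<Longrightarrow> t \<in> Gamma_sigma p \<sigma>"
  unfolding Gamma_sigma_def Gamma_sigma_circ_def
  by (intro subsetD[OF subset_closed_normal_closure] subsetD[OF subset_closed_subgroup_gen]) simp

theorem fpm_mod_frattini: "fpm_mod_frattini p \<sigma>"
proof -
  obtain t0 X0 where t0: "t0 \<in> carrier G" "\<sigma> t0 = t0" "lead 1 t0 X0"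
    and X0: "sl2_mod_p X0" "\<not> mcong (int p) X0 0" "mcong (int p) (lie_sigma X0) X0"
    by (rule exists_fixed_point_lead)
  obtain Y where "sl2_mod_p Y" and off: "\<And>l. \<not> mcong (int p) (bracket Y X0) (of_int l * X0)"
    using exists_bracket_off_line[OF X0(1,2)] by blast
  then obtain g where g: "lead 1 g Y" using exists_lead1 by blast
  have "frattini p (Gamma_sigma p \<sigma>) \<subseteq> line_subgroup 2 X0"
    by (rule frattini_subset_line_subgroup[OF Gamma_sigma_subset_line_subgroup[OF X0]])
  then have "r_coset G (frattini p (Gamma_sigma p \<sigma>)) (g \<otimes>\<^bsub>G\<^esub> t0 \<otimes>\<^bsub>G\<^esub> inv\<^bsub>G\<^esub> g)
      \<noteq> r_coset G (frattini p (Gamma_sigma p \<sigma>)) t0"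
    using conj_r_coset_ne[OF _ _ g t0(3) off] one_closed_subgroup_gen by (simp add: frattini_def)
  then show ?thesis
    unfolding fpm_mod_frattini_def
    using lead_carrier[OF g] fixed_in_Gamma_sigma[OF t0(1,2)] by blast
qed

end

theorem mainTheorem15:
  fixes p :: nat and \<sigma> :: "mat2 \<Rightarrow> mat2"
  assumes "prime p" and "odd p"
    and "continuous_aut p \<sigma>"
    and "\<forall>g\<in>carrier (Sl21 p). \<sigma> (\<sigma> g) = g"
    and "\<exists>g\<in>carrier (Sl21 p). \<sigma> g \<noteq> g"
  shows "fpm_mod_frattini p \<sigma>"
proof -
  interpret sl21_involution p \<sigma>
    using assms by unfold_locales auto
  show ?thesis by (rule fpm_mod_frattini)
qed

end
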